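(* Let $n_X,n_Y$ be positive integers and let $T$ be a sublinear operator mapping simple functions on $\mathbb{R}^{n_Y}$ (with respect to Lebesgue measure) into measurable functions on $\mathbb{R}^{n_X}$. Assume there are constants $A,B>0$ and $a\in\mathbb{R}$ with $a\neq-\frac{n_X}{2}$ such that for all simple functions $f$ on $\mathbb{R}^{n_Y}$: (i) $\|Tf\|_{L^{\infty}(dx)}\le A\|f\|_{L^1(dy)}$; (ii) $\||x|^aTf\|_{L^2(dx)}\le B\|f\|_{L^2(dy)}$. Then for every $\theta\in(0,1)$ there is a constant $C=C(a,n_X,\theta)$ such that \[ \||x|^{a\theta-(1-\theta)n_X}Tf\|_{L^p(dx)}\le CA^{1-\theta}B^{\theta}\|f\|_{L^p(dy)},\qquad \frac1p=\frac{\theta}{2}+1-\theta, \] for all simple functions $f$ on $\mathbb{R}^{n_Y}$.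
   Context: $T$ sublinear means $|T(f+g)|\le|Tf|+|Tg|$ and $|T(cf)|=|c||Tf|$. Norms in $x$ are over $\mathbb{R}^{n_X}$ with Lebesgue measure, norms in $y$ over $\mathbb{R}^{n_Y}$ with Lebesgue measure. *)

theory Defs
  imports "HOL-Analysis.Analysis" "HOL-Probability.Essential_Supremum"
begin

definition lebesgue_n :: "nat \<Rightarrow> (nat \<Rightarrow> real) measure" where
  "lebesgue_n n = completion (PiM {..<n} (\<lambda>_. lborel))"

definition simple_fun :: "'a measure \<Rightarrow> ('a \<Rightarrow> real) \<Rightarrow> bool" where
  "simple_fun M f \<longleftrightarrow> simple_function M f \<and> emeasure M {y \<in> space M. f y \<noteq> 0} < \<infinity>"

definition Lp_norm :: "'a measure \<Rightarrow> real \<Rightarrow> ('a \<Rightarrow> real) \<Rightarrow> ennreal" where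
  "Lp_norm M p f =
     (let I = (\<integral>\<^sup>+ x. ennreal (\<bar>f x\<bar> powr p) \<partial>M)
      in if I = \<infinity> then \<infinity> else ennreal (enn2real I powr (1 / p)))"

definition Linf_norm :: "'a measure \<Rightarrow> ('a \<Rightarrow> real) \<Rightarrow> ennreal" where
  "Linf_norm M f = esssup M (\<lambda>x. ennreal \<bar>f x\<bar>)"

definition sublinear_on :: "(('b \<Rightarrow> real) \<Rightarrow> bool) \<Rightarrow> (('b \<Rightarrow> real) \<Rightarrow> ('a \<Rightarrow> real)) \<Rightarrow> bool" where
  "sublinear_on S T \<longleftrightarrow>
     (\<forall>f g x. S f \<and> S g \<longrightarrow> \<bar>T (\<lambda>y. f y + g y) x\<bar> \<le> \<bar>T f x\<bar> + \<bar>T g x\<bar>) \<and>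
     (\<forall>c f x. S f \<longrightarrow> \<bar>T (\<lambda>y. c * f y) x\<bar> = \<bar>c\<bar> * \<bar>T f x\<bar>)"

end

(* Cut R^n into the dyadic annuli 2^k <= |x| < 2^(k+1) and, on the k-th annulus, split f at a
   height lambda into its large part, controlled in L^1 and hence by (i) in L^infinity, and its
   small part, controlled in L^2 and hence by (ii) and Hoelder on the annulus in weighted L^2.
   By homogeneity the k-th annulus contributes at most a constant times
     A^(p(1-theta)) B^(p theta) ((s^(-theta) ||f_>lambda||_1)^p + s^(2-p) ||f_<=lambda||_2^p),
   s = (B/A) 2^(-k(a + n/2)); these scales form a geometric sequence of ratio different from 1
   exactly because a <> -n/2.  Taking for lambda the least height above which f has mass at most
   s^2, the sum over k depends only on the distribution of f, and geometric series, Jensen's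
   inequality and a dyadic decomposition of the values of f bound it by a constant times
   ||f||_p^p. *)

theory Submission
  imports Defs
begin

lemma Youngs_inequality_nonneg:
  fixes a b \<alpha> :: real
  assumes "0 < \<alpha>" "\<alpha> < 1" "0 \<le> a" "0 \<le> b"
  shows "a powr \<alpha> * b powr (1 - \<alpha>) \<le> \<alpha> * a + (1 - \<alpha>) * b"
proof (cases "a = 0 \<or> b = 0")
  case True
  then show ?thesis using assms by auto
next
  case False
  then show ?thesis using Youngs_inequality_0[of \<alpha> "1 - \<alpha>" a b] assms by auto
qed

lemma Holder_inequality_sum:
  fixes c x y :: "'i \<Rightarrow> real"
  assumes "finite S" "0 < \<alpha>" "\<alpha> < 1"
    and nonneg: "\<And>i. i \<in> S \<Longrightarrow> 0 \<le> c i \<and> 0 \<le> x i \<and> 0 \<le> y i"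
  shows "(\<Sum>i\<in>S. c i * (x i powr \<alpha> * y i powr (1 - \<alpha>)))
         \<le> (\<Sum>i\<in>S. c i * x i) powr \<alpha> * (\<Sum>i\<in>S. c i * y i) powr (1 - \<alpha>)"
proof -
  define X where "X = (\<Sum>i\<in>S. c i * x i)"
  define Y where "Y = (\<Sum>i\<in>S. c i * y i)"
  have "0 \<le> X" "0 \<le> Y" unfolding X_def Y_def using nonneg by (auto intro: sum_nonneg)
  show ?thesis
  proof (cases "X = 0 \<or> Y = 0")
    case True
    then have "c i * x i = 0 \<or> c i * y i = 0" if "i \<in> S" for i
      using that nonneg assms(1) by (auto simp: X_def Y_def sum_nonneg_eq_0_iff)
    then have "(\<Sum>i\<in>S. c i * (x i powr \<alpha> * y i powr (1 - \<alpha>))) = 0"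
      using assms(3) by (intro sum.neutral) auto
    then show ?thesis by simp
  next
    case False
    with \<open>0 \<le> X\<close> \<open>0 \<le> Y\<close> have "0 < X" "0 < Y" by auto
    \<comment> \<open>Young's inequality for the normalised terms \<open>x i / X\<close> and \<open>y i / Y\<close>\<close>
    have "c i * (x i powr \<alpha> * y i powr (1 - \<alpha>))
        \<le> X powr \<alpha> * Y powr (1 - \<alpha>) * (\<alpha> * (c i * x i / X) + (1 - \<alpha>) * (c i * y i / Y))"
      if "i \<in> S" for i
    proof -
      have "x i powr \<alpha> * y i powr (1 - \<alpha>)
          = X powr \<alpha> * Y powr (1 - \<alpha>) * ((x i / X) powr \<alpha> * (y i / Y) powr (1 - \<alpha>))"
        using \<open>0 < X\<close> \<open>0 < Y\<close> nonneg[OF that] by (simp add: powr_divide)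
      also have "\<dots> \<le> X powr \<alpha> * Y powr (1 - \<alpha>) * (\<alpha> * (x i / X) + (1 - \<alpha>) * (y i / Y))"
        using Youngs_inequality_nonneg[of \<alpha> "x i / X" "y i / Y"] assms \<open>0 < X\<close> \<open>0 < Y\<close>
          nonneg[OF that]
        by (intro mult_left_mono) auto
      finally have "c i * (x i powr \<alpha> * y i powr (1 - \<alpha>))
          \<le> c i * (X powr \<alpha> * Y powr (1 - \<alpha>) * (\<alpha> * (x i / X) + (1 - \<alpha>) * (y i / Y)))"
        using nonneg[OF that] by (intro mult_left_mono) auto
      then show ?thesis by (simp add: algebra_simps)
    qed
    then have "(\<Sum>i\<in>S. c i * (x i powr \<alpha> * y i powr (1 - \<alpha>)))
        \<le> (\<Sum>i\<in>S. X powr \<alpha> * Y powr (1 - \<alpha>) * (\<alpha> * (c i * x i / X) + (1 - \<alpha>) * (c i * y i / Y)))"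
      by (rule sum_mono)
    also have "\<dots> = X powr \<alpha> * Y powr (1 - \<alpha>) * (\<alpha> * (X / X) + (1 - \<alpha>) * (Y / Y))"
      unfolding sum_distrib_left[symmetric] sum.distrib sum_divide_distrib[symmetric]
      by (simp add: X_def Y_def)
    also have "\<dots> = X powr \<alpha> * Y powr (1 - \<alpha>)"
      using \<open>0 < X\<close> \<open>0 < Y\<close> by simp
    finally show ?thesis by (simp add: X_def Y_def)
  qed
qed

lemma weighted_power_mean_le:
  fixes c x :: "'i \<Rightarrow> real"
  assumes "finite S" "1 < p" and nonneg: "\<And>i. i \<in> S \<Longrightarrow> 0 \<le> c i \<and> 0 \<le> x i"
  shows "(\<Sum>i\<in>S. c i * x i) powr p \<le> (\<Sum>i\<in>S. c i) powr (p - 1) * (\<Sum>i\<in>S. c i * x i powr p)"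
proof -
  have "(\<Sum>i\<in>S. c i * x i) = (\<Sum>i\<in>S. c i * ((x i powr p) powr (1/p) * 1 powr (1 - 1/p)))"
    using nonneg assms(2) by (intro sum.cong) (auto simp: powr_powr)
  also have "\<dots> \<le> (\<Sum>i\<in>S. c i * x i powr p) powr (1/p) * (\<Sum>i\<in>S. c i) powr (1 - 1/p)"
    using assms by (intro order_trans[OF Holder_inequality_sum]) auto
  finally have "(\<Sum>i\<in>S. c i * x i) powr p
      \<le> ((\<Sum>i\<in>S. c i * x i powr p) powr (1/p) * (\<Sum>i\<in>S. c i) powr (1 - 1/p)) powr p"
    using nonneg assms(2) by (intro powr_mono2) (auto intro: sum_nonneg)
  also have "\<dots> = (\<Sum>i\<in>S. c i * x i powr p) powr (1/p * p) * (\<Sum>i\<in>S. c i) powr ((1 - 1/p) * p)"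
    using nonneg by (simp add: powr_mult powr_powr sum_nonneg)
  also have "\<dots> = (\<Sum>i\<in>S. c i) powr (p - 1) * (\<Sum>i\<in>S. c i * x i powr p)"
    using nonneg assms(2) by (simp add: left_diff_distrib sum_nonneg)
  finally show ?thesis .
qed

lemma powr_add_le_two_powr:
  fixes a b p :: real
  assumes "0 \<le> a" "0 \<le> b" "1 < p"
  shows "(a + b) powr p \<le> 2 powr (p - 1) * (a powr p + b powr p)"
  using weighted_power_mean_le[of "{False, True}" p "\<lambda>_. 1" "\<lambda>i. if i then a else b"] assms
  by (simp add: add.commute)

lemma powr_add_le_add_powr:
  fixes x y \<alpha> :: real
  assumes "0 < \<alpha>" "\<alpha> \<le> 1" "0 \<le> x" "0 \<le> y"
  shows "(x + y) powr \<alpha> \<le> x powr \<alpha> + y powr \<alpha>"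
proof (cases "x + y = 0")
  case True
  then show ?thesis using assms by auto
next
  case False
  then have "0 < x + y" using assms by auto
  have "x / (x + y) \<le> (x / (x + y)) powr \<alpha>"
    using powr_mono'[of \<alpha> 1 "x / (x + y)"] \<open>0 < x + y\<close> assms by (auto simp: divide_le_eq)
  moreover have "y / (x + y) \<le> (y / (x + y)) powr \<alpha>"
    using powr_mono'[of \<alpha> 1 "y / (x + y)"] \<open>0 < x + y\<close> assms by (auto simp: divide_le_eq)
  moreover have "x / (x + y) + y / (x + y) = 1"
    using \<open>0 < x + y\<close> by (simp add: add_divide_distrib[symmetric])
  ultimately have "(x + y) powr \<alpha> * 1 \<le> (x + y) powr \<alpha> * ((x / (x + y)) powr \<alpha> + (y / (x + y)) powr \<alpha>)"
    by (intro mult_left_mono) auto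
  also have "\<dots> = x powr \<alpha> + y powr \<alpha>"
    using \<open>0 < x + y\<close> assms by (simp add: powr_divide distrib_left)
  finally show ?thesis by simp
qed

lemma powr_sum_le_sum_powr:
  fixes x :: "'i \<Rightarrow> real"
  assumes "finite S" "0 < \<alpha>" "\<alpha> \<le> 1" "\<And>i. i \<in> S \<Longrightarrow> 0 \<le> x i"
  shows "(\<Sum>i\<in>S. x i) powr \<alpha> \<le> (\<Sum>i\<in>S. x i powr \<alpha>)"
  using assms
proof (induction S rule: finite_induct)
  case (insert a F)
  then have "(x a + (\<Sum>i\<in>F. x i)) powr \<alpha> \<le> x a powr \<alpha> + (\<Sum>i\<in>F. x i) powr \<alpha>"
    by (intro powr_add_le_add_powr) (auto intro: sum_nonneg)
  with insert show ?case by simp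
qed simp

lemma power_powr:
  assumes "0 < (x::real)"
  shows "(x ^ n) powr e = (x powr e) ^ n"
proof -
  have "(x ^ n) powr e = x powr (real n * e)" using assms by (simp add: powr_powr flip: powr_realpow)
  also have "\<dots> = (x powr e) ^ n" using assms by (simp add: powr_power)
  finally show ?thesis .
qed

lemma sum_power_inj_on_le:
  fixes q :: real
  assumes "0 < q" "q < 1" "finite S" "inj_on h S"
  shows "(\<Sum>j\<in>S. q ^ h j) \<le> 1 / (1 - q)"
proof -
  have "(\<Sum>j\<in>S. q ^ h j) = (\<Sum>i\<in>h ` S. q ^ i)" using assms by (simp add: sum.reindex)
  also have "\<dots> < 1 / (1 - q)" using assms by (intro geometric_sum_less) auto
  finally show ?thesis by simp
qed

lemma sum_geometric_convolution_powr_le: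
  fixes x :: "nat \<Rightarrow> real"
  assumes "0 < q" "q < 1" "1 < p" "\<And>j. 0 \<le> x j"
  shows "(\<Sum>k<M. (\<Sum>j\<le>k. q ^ (k - j) * x j) powr p) \<le> (1 / (1 - q)) powr p * (\<Sum>j<M. x j powr p)"
proof -
  define G where "G = 1 / (1 - q)"
  have "0 < G" using assms by (simp add: G_def)
  have "(\<Sum>j\<le>k. q ^ (k - j) * x j) powr p \<le> G powr (p - 1) * (\<Sum>j\<le>k. q ^ (k - j) * x j powr p)"
    for k
  proof -
    have "(\<Sum>j\<le>k. q ^ (k - j)) \<le> G"
      unfolding G_def using assms by (intro sum_power_inj_on_le) (auto simp: inj_on_def)
    then have "(\<Sum>j\<le>k. q ^ (k - j)) powr (p - 1) \<le> G powr (p - 1)"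
      using assms by (intro powr_mono2) (auto intro: sum_nonneg)
    moreover have "(\<Sum>j\<le>k. q ^ (k - j) * x j) powr p
        \<le> (\<Sum>j\<le>k. q ^ (k - j)) powr (p - 1) * (\<Sum>j\<le>k. q ^ (k - j) * x j powr p)"
      using assms by (intro weighted_power_mean_le) auto
    ultimately show ?thesis
      using assms by (smt (verit, best) mult_right_mono sum_nonneg powr_ge_zero mult_nonneg_nonneg
          zero_le_power)
  qed
  then have "(\<Sum>k<M. (\<Sum>j\<le>k. q ^ (k - j) * x j) powr p)
      \<le> (\<Sum>k<M. G powr (p - 1) * (\<Sum>j\<le>k. q ^ (k - j) * x j powr p))"
    by (rule sum_mono)
  also have "\<dots> = G powr (p - 1) * (\<Sum>k<M. \<Sum>j\<in>{j. j < M \<and> j \<le> k}. q ^ (k - j) * x j powr p)"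
    unfolding sum_distrib_left[symmetric] by (intro arg_cong2[where f="(*)"] sum.cong refl) auto
  also have "\<dots> \<le> G powr (p - 1) * ((\<Sum>j<M. x j powr p) * G)"
  proof (intro mult_left_mono)
    have "(\<Sum>k<M. \<Sum>j\<in>{j. j < M \<and> j \<le> k}. q ^ (k - j) * x j powr p)
        = (\<Sum>j<M. x j powr p * (\<Sum>k\<in>{k. k < M \<and> j \<le> k}. q ^ (k - j)))"
      using sum.swap_restrict[of "{..<M}" "{..<M}" "\<lambda>k j. q ^ (k - j) * x j powr p" "\<lambda>k j. j \<le> k"]
      by (simp add: sum_distrib_left mult.commute)
    also have "\<dots> \<le> (\<Sum>j<M. x j powr p) * G"
      unfolding G_def sum_distrib_right using assms
      by (intro sum_mono mult_left_mono sum_power_inj_on_le) (auto simp: inj_on_def)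
    finally show "(\<Sum>k<M. \<Sum>j\<in>{j. j < M \<and> j \<le> k}. q ^ (k - j) * x j powr p)
        \<le> (\<Sum>j<M. x j powr p) * G" .
  qed simp
  also have "\<dots> = G powr p * (\<Sum>j<M. x j powr p)"
    using \<open>0 < G\<close> by (simp add: powr_diff)
  finally show ?thesis by (simp add: G_def)
qed

lemma sum_geometric_powr_below_le:
  fixes \<rho> s e Y :: real
  assumes "1 < \<rho>" "0 < s" "0 < e"
  shows "(\<Sum>k\<in>{k. k < M \<and> s * \<rho> ^ k < Y}. (s * \<rho> ^ k) powr e) \<le> Y powr e / (1 - \<rho> powr (-e))"
proof -
  define K where "K = {k. k < M \<and> s * \<rho> ^ k < Y}"
  define r where "r = \<rho> powr (-e)"
  have "0 < r" "r < 1" using assms by (auto simp: r_def powr_less_one)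
  show ?thesis
  proof (cases "K = {}")
    case True
    then show ?thesis using \<open>r < 1\<close> by (simp add: K_def[symmetric] r_def[symmetric])
  next
    case False
    have "finite K" by (simp add: K_def)
    define m where "m = Max K"
    have "m \<in> K" "\<And>k. k \<in> K \<Longrightarrow> k \<le> m"
      using False \<open>finite K\<close> by (simp_all add: m_def)
    \<comment> \<open>every term is dominated by the largest one, \<open>(s \<rho>\<^sup>m)\<^sup>e < Y\<^sup>e\<close>, times a power of \<open>r\<close>\<close>
    have dom: "(s * \<rho> ^ k) powr e = (s * \<rho> ^ m) powr e * r ^ (m - k)" if "k \<le> m" for k
    proof -
      have "\<rho> ^ m = \<rho> ^ k * \<rho> ^ (m - k)" using that by (simp flip: power_add)
      moreover have "(\<rho> ^ (m - k)) powr e * r ^ (m - k) = 1"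
        using assms by (simp add: r_def power_powr powr_add[symmetric] flip: power_mult_distrib)
      ultimately show ?thesis
        using assms by (simp add: powr_mult mult_ac)
    qed
    have "(\<Sum>k\<in>K. (s * \<rho> ^ k) powr e) = (s * \<rho> ^ m) powr e * (\<Sum>k\<in>K. r ^ (m - k))"
      unfolding sum_distrib_left using \<open>\<And>k. k \<in> K \<Longrightarrow> k \<le> m\<close> by (intro sum.cong refl dom)
    also have "\<dots> \<le> (s * \<rho> ^ m) powr e * (1 / (1 - r))"
      using \<open>0 < r\<close> \<open>r < 1\<close> \<open>finite K\<close> \<open>\<And>k. k \<in> K \<Longrightarrow> k \<le> m\<close>
      by (intro mult_left_mono sum_power_inj_on_le inj_onI) (auto, metis diff_diff_cancel)
    also have "\<dots> \<le> Y powr e * (1 / (1 - r))"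
      using \<open>m \<in> K\<close> \<open>r < 1\<close> assms by (intro mult_right_mono powr_mono2) (auto simp: K_def)
    finally show ?thesis by (simp add: K_def r_def)
  qed
qed

lemma sum_disjointed_atMost:
  assumes "mono U" "\<And>j. finite (U j)"
  shows "sum g (U k) = (\<Sum>j\<le>k. sum g (disjointed U j))"
proof -
  have "{0..<Suc k} = {..k}" by auto
  then have "(\<Union>j\<le>k. disjointed U j) = (\<Union>j\<in>{0..<Suc k}. U j)"
    using finite_UN_disjointed_eq[of U "Suc k"] by simp
  also have "\<dots> = U k" using \<open>mono U\<close> by (fastforce simp: mono_def less_Suc_eq_le)
  finally have "U k = (\<Union>j\<le>k. disjointed U j)" by simp
  moreover have "finite (disjointed U j)" for j
    using assms(2) disjointed_subset by (rule finite_subset[rotated])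
  ultimately show ?thesis
    using disjoint_family_disjointed[of U]
    by (simp add: sum.UNION_disjoint disjoint_family_on_def)
qed

section \<open>Truncation levels of a finite distribution\<close>

definition tail_mass :: "real set \<Rightarrow> (real \<Rightarrow> real) \<Rightarrow> real \<Rightarrow> real" where
  "tail_mass R \<mu> u = (\<Sum>v\<in>{v\<in>R. u < \<bar>v\<bar>}. \<mu> v)"

definition tail_L1 :: "real set \<Rightarrow> (real \<Rightarrow> real) \<Rightarrow> real \<Rightarrow> real" where
  "tail_L1 R \<mu> l = (\<Sum>v\<in>{v\<in>R. l < \<bar>v\<bar>}. \<bar>v\<bar> * \<mu> v)"

definition head_L2sq :: "real set \<Rightarrow> (real \<Rightarrow> real) \<Rightarrow> real \<Rightarrow> real" where
  "head_L2sq R \<mu> l = (\<Sum>v\<in>{v\<in>R. \<bar>v\<bar> \<le> l}. \<bar>v\<bar> powr 2 * \<mu> v)"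

definition moment :: "real set \<Rightarrow> (real \<Rightarrow> real) \<Rightarrow> real \<Rightarrow> real" where
  "moment R \<mu> p = (\<Sum>v\<in>R. \<bar>v\<bar> powr p * \<mu> v)"

text \<open>The smallest truncation level whose tail carries mass at most \<open>\<sigma>\<^sup>2\<close>; since the tail mass
  only jumps at the values \<open>\<bar>v\<bar>\<close>, it suffices to search among these and \<open>0\<close>.\<close>
definition truncation_level :: "real set \<Rightarrow> (real \<Rightarrow> real) \<Rightarrow> real \<Rightarrow> real" where
  "truncation_level R \<mu> \<sigma> = Min {u \<in> insert 0 (abs ` R). tail_mass R \<mu> u \<le> \<sigma>\<^sup>2}"

lemma truncation_level_mem:
  assumes "finite R"
  shows "truncation_level R \<mu> \<sigma> \<in> {u \<in> insert 0 (abs ` R). tail_mass R \<mu> u \<le> \<sigma>\<^sup>2}"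
proof -
  define W where "W = insert 0 (abs ` R)"
  have "finite W" "W \<noteq> {}" using assms by (auto simp: W_def)
  then have "{v\<in>R. Max W < \<bar>v\<bar>} = {}" by (auto simp: W_def)
  then have "tail_mass R \<mu> (Max W) = 0" by (simp only: tail_mass_def) simp
  then have "Max W \<in> {u \<in> W. tail_mass R \<mu> u \<le> \<sigma>\<^sup>2}"
    using Max_in[OF \<open>finite W\<close> \<open>W \<noteq> {}\<close>] by simp
  then show ?thesis
    unfolding truncation_level_def W_def[symmetric] using \<open>finite W\<close> by (intro Min_in) auto
qed

lemma truncation_level_nonneg: "finite R \<Longrightarrow> 0 \<le> truncation_level R \<mu> \<sigma>"
  using truncation_level_mem[of "R" "\<mu>" "\<sigma>"] by auto

lemma tail_mass_truncation_level_le: "finite R \<Longrightarrow> tail_mass R \<mu> (truncation_level R \<mu> \<sigma>) \<le> \<sigma>\<^sup>2"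
  using truncation_level_mem[of "R" "\<mu>" "\<sigma>"] by auto

lemma tail_mass_gt_below_truncation_level:
  assumes "finite R" "0 \<le> u" "u < truncation_level R \<mu> \<sigma>"
  shows "\<sigma>\<^sup>2 < tail_mass R \<mu> u"
proof -
  define W where "W = insert 0 (abs ` R)"
  have "finite {w\<in>W. w \<le> u}" "{w\<in>W. w \<le> u} \<noteq> {}"
    using assms by (auto simp: W_def)
  \<comment> \<open>\<open>u'\<close> is the largest candidate level not exceeding \<open>u\<close>, so it has the same tail\<close>
  define u' where "u' = Max {w\<in>W. w \<le> u}"
  have "u' \<in> W" "u' \<le> u"
    using Max_in[OF \<open>finite {w\<in>W. w \<le> u}\<close>] \<open>{w\<in>W. w \<le> u} \<noteq> {}\<close> by (auto simp: u'_def)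
  have "{v\<in>R. u < \<bar>v\<bar>} = {v\<in>R. u' < \<bar>v\<bar>}"
  proof -
    have "\<bar>v\<bar> \<le> u'" if "v \<in> R" "\<bar>v\<bar> \<le> u" for v
      using that \<open>finite {w\<in>W. w \<le> u}\<close> by (auto simp: u'_def W_def intro: Max_ge)
    then show ?thesis using \<open>u' \<le> u\<close> by force
  qed
  moreover have "\<not> tail_mass R \<mu> u' \<le> \<sigma>\<^sup>2"
  proof
    assume "tail_mass R \<mu> u' \<le> \<sigma>\<^sup>2"
    then have "truncation_level R \<mu> \<sigma> \<le> u'"
      unfolding truncation_level_def W_def[symmetric] using \<open>u' \<in> W\<close> assms(1) by (intro Min_le) (auto simp: W_def)
    then show False using \<open>u' \<le> u\<close> assms(3) by simp
  qed
  ultimately show ?thesis by (simp add: tail_mass_def)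
qed

lemma truncation_level_antimono:
  assumes "finite R" "0 < \<sigma>" "\<sigma> \<le> \<sigma>'"
  shows "truncation_level R \<mu> \<sigma>' \<le> truncation_level R \<mu> \<sigma>"
proof (rule ccontr)
  assume "\<not> truncation_level R \<mu> \<sigma>' \<le> truncation_level R \<mu> \<sigma>"
  then have "\<sigma>'\<^sup>2 < tail_mass R \<mu> (truncation_level R \<mu> \<sigma>)"
    using assms(1) by (intro tail_mass_gt_below_truncation_level truncation_level_nonneg) auto
  moreover have "\<sigma>\<^sup>2 \<le> \<sigma>'\<^sup>2" using assms by (intro power_mono) auto
  ultimately show False using tail_mass_truncation_level_le[OF assms(1), of "\<mu>" \<sigma>] by simp
qed

lemma mono_tail_sets_truncation_level:
  assumes "finite R" "mono \<sigma>" "\<And>k. 0 < \<sigma> k"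
  shows "mono (\<lambda>k. {v \<in> R. truncation_level R \<mu> (\<sigma> k) < \<bar>v\<bar>})"
proof (intro monoI subsetI)
  fix k j v assume "k \<le> j" "v \<in> {v \<in> R. truncation_level R \<mu> (\<sigma> k) < \<bar>v\<bar>}"
  moreover have "truncation_level R \<mu> (\<sigma> j) \<le> truncation_level R \<mu> (\<sigma> k)"
    using assms \<open>k \<le> j\<close> by (intro truncation_level_antimono) (auto dest: monoD)
  ultimately show "v \<in> {v \<in> R. truncation_level R \<mu> (\<sigma> j) < \<bar>v\<bar>}" by auto
qed

lemma sum_moment_disjoint_family_le:
  fixes D :: "nat \<Rightarrow> real set"
  assumes "disjoint_family D" "\<And>j. D j \<subseteq> R" "finite R" "\<And>v. v \<in> R \<Longrightarrow> 0 \<le> \<mu> v"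
  shows "(\<Sum>j<M. moment (D j) \<mu> p) \<le> moment R \<mu> p"
proof -
  have "finite (D j)" for j using assms(2,3) by (rule finite_subset)
  then have "(\<Sum>j<M. moment (D j) \<mu> p) = moment (\<Union>j<M. D j) \<mu> p"
    unfolding moment_def using assms(1)
    by (intro sum.UNION_disjoint[symmetric]) (auto simp: disjoint_family_on_def)
  also have "\<dots> \<le> moment R \<mu> p"
    unfolding moment_def using assms(2-4) by (intro sum_mono2) auto
  finally show ?thesis .
qed

text \<open>Jensen's inequality on a set of mass at most \<open>\<sigma>\<^sup>2\<close>; the exponent \<open>-\<theta>\<close> is the one for
  which \<open>2 (p - 1) = \<theta> p\<close> makes the mass factor cancel.\<close>
lemma scaled_L1_powr_le_moment:
  fixes V :: "real set" and \<mu> :: "real \<Rightarrow> real"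
  assumes "finite V" "\<And>v. v \<in> V \<Longrightarrow> 0 \<le> \<mu> v" "(\<Sum>v\<in>V. \<mu> v) \<le> \<sigma>\<^sup>2" "0 < \<sigma>" "0 < \<theta>" "\<theta> < 1"
  defines "p \<equiv> 2 / (2 - \<theta>)"
  shows "(\<sigma> powr (-\<theta>) * (\<Sum>v\<in>V. \<bar>v\<bar> * \<mu> v)) powr p \<le> moment V \<mu> p"
proof -
  have "1 < p" "2 * (p - 1) = \<theta> * p" using assms(5,6) by (auto simp: p_def field_simps)
  have "(\<Sum>v\<in>V. \<bar>v\<bar> * \<mu> v) powr p \<le> (\<Sum>v\<in>V. \<mu> v) powr (p - 1) * moment V \<mu> p"
    using weighted_power_mean_le[OF assms(1) \<open>1 < p\<close>, of "\<mu>" "\<lambda>v. \<bar>v\<bar>"] assms(2)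
    by (simp add: moment_def mult.commute)
  also have "\<dots> \<le> (\<sigma>\<^sup>2) powr (p - 1) * moment V \<mu> p"
    using assms(2,3) \<open>1 < p\<close>
    by (intro mult_right_mono powr_mono2) (auto simp: moment_def intro!: sum_nonneg)
  also have "(\<sigma>\<^sup>2) powr (p - 1) = \<sigma> powr (\<theta> * p)"
    using \<open>0 < \<sigma>\<close> \<open>2 * (p - 1) = \<theta> * p\<close> by (simp add: powr_powr flip: powr_numeral)
  finally have "\<sigma> powr (-\<theta> * p) * (\<Sum>v\<in>V. \<bar>v\<bar> * \<mu> v) powr p
      \<le> \<sigma> powr (-\<theta> * p) * (\<sigma> powr (\<theta> * p) * moment V \<mu> p)"
    by (intro mult_left_mono) auto
  also have "\<dots> = moment V \<mu> p"
    using \<open>0 < \<sigma>\<close> by (simp add: powr_add[symmetric] mult.assoc[symmetric])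
  finally show ?thesis
    using \<open>0 < \<sigma>\<close> assms(2) by (simp add: powr_mult powr_powr sum_nonneg)
qed

text \<open>As \<open>\<sigma>\<close> grows, the tail sets \<open>{\<bar>v\<bar> > level \<sigma>}\<close> grow; splitting them into disjoint shells
  turns the sum into a convolution with a geometric kernel.\<close>
lemma sum_tail_L1_truncation_level_le:
  fixes R :: "real set" and \<mu> :: "real \<Rightarrow> real"
  assumes fin: "finite R" and nonneg: "\<And>v. v \<in> R \<Longrightarrow> 0 \<le> \<mu> v"
    and "1 < \<rho>" "0 < s" "0 < \<theta>" "\<theta> < 1"
  defines "p \<equiv> 2 / (2 - \<theta>)"
  shows "(\<Sum>k<M. ((s * \<rho> ^ k) powr (-\<theta>) * tail_L1 R \<mu> (truncation_level R \<mu> (s * \<rho> ^ k))) powr p)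
         \<le> (1 / (1 - \<rho> powr (-\<theta>))) powr p * moment R \<mu> p"
proof -
  have "1 < p" using assms(5,6) by (simp add: p_def field_simps)
  define \<sigma> where "\<sigma> k = s * \<rho> ^ k" for k
  have "0 < \<sigma> k" for k using assms(3,4) by (simp add: \<sigma>_def)
  define U where "U k = {v \<in> R. truncation_level R \<mu> (\<sigma> k) < \<bar>v\<bar>}" for k
  have "mono \<sigma>" using assms(3,4) by (auto simp: \<sigma>_def mono_def power_increasing)
  have "mono U"
    unfolding U_def using fin \<open>mono \<sigma>\<close> \<open>\<And>k. 0 < \<sigma> k\<close> by (rule mono_tail_sets_truncation_level)
  define D where "D = disjointed U"
  have "D j \<subseteq> R" for j using disjointed_subset[of U j] by (auto simp: D_def U_def)
  then have "finite (D j)" for j using fin by (rule finite_subset)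
  have disj: "disjoint_family D" unfolding D_def by (rule disjoint_family_disjointed)
  define x where "x j = \<sigma> j powr (-\<theta>) * (\<Sum>v\<in>D j. \<bar>v\<bar> * \<mu> v)" for j
  have "0 \<le> x j" for j unfolding x_def using nonneg \<open>D j \<subseteq> R\<close> by (auto intro!: sum_nonneg mult_nonneg_nonneg)
  have shell: "x j powr p \<le> moment (D j) \<mu> p" for j
  proof -
    have "(\<Sum>v\<in>D j. \<mu> v) \<le> (\<Sum>v\<in>U j. \<mu> v)"
      using disjointed_subset[of U j] nonneg fin by (intro sum_mono2) (auto simp: D_def U_def)
    also have "\<dots> \<le> (\<sigma> j)\<^sup>2" using tail_mass_truncation_level_le[OF fin] by (simp add: tail_mass_def U_def)
    finally show ?thesis
      unfolding x_def p_def using nonneg \<open>D j \<subseteq> R\<close> \<open>0 < \<sigma> j\<close> assms(5,6)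
      by (intro scaled_L1_powr_le_moment \<open>finite (D j)\<close>) auto
  qed
  define q where "q = \<rho> powr (-\<theta>)"
  have "0 < q" "q < 1" using assms(3,5) by (auto simp: q_def powr_less_one)
  have conv: "\<sigma> k powr (-\<theta>) * tail_L1 R \<mu> (truncation_level R \<mu> (\<sigma> k)) = (\<Sum>j\<le>k. q ^ (k - j) * x j)" for k
  proof -
    have "tail_L1 R \<mu> (truncation_level R \<mu> (\<sigma> k)) = (\<Sum>v\<in>U k. \<bar>v\<bar> * \<mu> v)"
      by (simp add: tail_L1_def U_def)
    also have "\<dots> = (\<Sum>j\<le>k. \<Sum>v\<in>D j. \<bar>v\<bar> * \<mu> v)"
      unfolding D_def by (rule sum_disjointed_atMost[OF \<open>mono U\<close>]) (simp add: U_def fin)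
    moreover have "\<sigma> k powr (-\<theta>) = q ^ (k - j) * \<sigma> j powr (-\<theta>)" if "j \<le> k" for j
    proof -
      have "\<sigma> i powr (-\<theta>) = s powr (-\<theta>) * q ^ i" for i
        using assms(3) by (simp add: \<sigma>_def q_def powr_mult power_powr)
      moreover have "q ^ k = q ^ (k - j) * q ^ j" using that by (simp flip: power_add)
      ultimately show ?thesis by simp
    qed
    ultimately show ?thesis by (simp add: sum_distrib_left x_def mult.assoc)
  qed
  have "(\<Sum>k<M. (\<sigma> k powr (-\<theta>) * tail_L1 R \<mu> (truncation_level R \<mu> (\<sigma> k))) powr p)
      \<le> (1 / (1 - q)) powr p * (\<Sum>j<M. x j powr p)"
    unfolding conv using \<open>0 < q\<close> \<open>q < 1\<close> \<open>1 < p\<close> \<open>\<And>j. 0 \<le> x j\<close>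
    by (rule sum_geometric_convolution_powr_le)
  also have "\<dots> \<le> (1 / (1 - q)) powr p * moment R \<mu> p"
  proof (intro mult_left_mono)
    have "(\<Sum>j<M. x j powr p) \<le> (\<Sum>j<M. moment (D j) \<mu> p)" by (intro sum_mono shell)
    also have "\<dots> \<le> moment R \<mu> p"
      using disj \<open>\<And>j. D j \<subseteq> R\<close> fin nonneg by (rule sum_moment_disjoint_family_le)
    finally show "(\<Sum>j<M. x j powr p) \<le> moment R \<mu> p" .
  qed simp
  finally show ?thesis by (simp add: \<sigma>_def q_def)
qed

section \<open>Dyadic decomposition of the values\<close>

definition dyadic_index :: "real \<Rightarrow> int" where
  "dyadic_index v = \<lceil>log 2 \<bar>v\<bar>\<rceil> - 1"

lemma dyadic_index_bounds:
  assumes "v \<noteq> 0"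
  shows "2 powr real_of_int (dyadic_index v) < \<bar>v\<bar>" "\<bar>v\<bar> \<le> 2 powr real_of_int (dyadic_index v + 1)"
proof -
  have "real_of_int \<lceil>log 2 \<bar>v\<bar>\<rceil> - 1 < log 2 \<bar>v\<bar>" "log 2 \<bar>v\<bar> \<le> real_of_int \<lceil>log 2 \<bar>v\<bar>\<rceil>"
    by linarith+
  moreover have "2 powr (log 2 \<bar>v\<bar>) = \<bar>v\<bar>" using assms by simp
  ultimately show "2 powr real_of_int (dyadic_index v) < \<bar>v\<bar>" "\<bar>v\<bar> \<le> 2 powr real_of_int (dyadic_index v + 1)"
    using powr_less_mono[of _ "log 2 \<bar>v\<bar>" 2] powr_mono[of "log 2 \<bar>v\<bar>" _ 2]
    by (auto simp: dyadic_index_def)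
qed

definition dyadic_mass :: "real set \<Rightarrow> (real \<Rightarrow> real) \<Rightarrow> int \<Rightarrow> real" where
  "dyadic_mass R \<mu> i = (\<Sum>v\<in>{v\<in>R. dyadic_index v = i}. \<mu> v)"

lemma dyadic_mass_nonneg: "(\<And>v. v \<in> R \<Longrightarrow> 0 \<le> \<mu> v) \<Longrightarrow> 0 \<le> dyadic_mass R \<mu> i"
  unfolding dyadic_mass_def by (auto intro: sum_nonneg)

lemma head_L2sq_powr_le_dyadic:
  assumes fin: "finite R" and R0: "0 \<notin> R" and nonneg: "\<And>v. v \<in> R \<Longrightarrow> 0 \<le> \<mu> v" and "0 < \<alpha>" "\<alpha> \<le> 1"
  shows "head_L2sq R \<mu> l powr \<alpha>
    \<le> (\<Sum>i\<in>{i \<in> dyadic_index ` R. 2 powr real_of_int i < l}.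
          ((2 powr real_of_int (i + 1)) powr 2 * dyadic_mass R \<mu> i) powr \<alpha>)"
proof -
  define I where "I = {i \<in> dyadic_index ` R. 2 powr real_of_int i < l}"
  have bounds: "2 powr real_of_int (dyadic_index v) < \<bar>v\<bar> \<and> \<bar>v\<bar> \<le> 2 powr real_of_int (dyadic_index v + 1)"
    if "v \<in> R" for v
    using dyadic_index_bounds[of v] that R0 by fastforce
  have "head_L2sq R \<mu> l \<le> (\<Sum>v\<in>{v\<in>R. \<bar>v\<bar> \<le> l}. (2 powr real_of_int (dyadic_index v + 1)) powr 2 * \<mu> v)"
    unfolding head_L2sq_def using bounds nonneg by (intro sum_mono mult_right_mono powr_mono2) auto
  also have "\<dots> \<le> (\<Sum>v\<in>{v\<in>R. 2 powr real_of_int (dyadic_index v) < l}.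
      (2 powr real_of_int (dyadic_index v + 1)) powr 2 * \<mu> v)"
    using fin R0 bounds nonneg by (intro sum_mono2) force+
  also have "\<dots> = (\<Sum>i\<in>I. \<Sum>v\<in>{v\<in>{v\<in>R. 2 powr real_of_int (dyadic_index v) < l}. dyadic_index v = i}.
      (2 powr real_of_int (dyadic_index v + 1)) powr 2 * \<mu> v)"
    using fin by (intro sum.group[symmetric]) (auto simp: I_def)
  also have "\<dots> = (\<Sum>i\<in>I. (2 powr real_of_int (i + 1)) powr 2 * dyadic_mass R \<mu> i)"
    unfolding dyadic_mass_def sum_distrib_left by (intro sum.cong refl) (auto simp: I_def)
  finally have "head_L2sq R \<mu> l powr \<alpha> \<le> (\<Sum>i\<in>I. (2 powr real_of_int (i + 1)) powr 2 * dyadic_mass R \<mu> i) powr \<alpha>"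
    using nonneg assms(4) by (intro powr_mono2) (auto simp: head_L2sq_def intro!: sum_nonneg)
  also have "\<dots> \<le> (\<Sum>i\<in>I. ((2 powr real_of_int (i + 1)) powr 2 * dyadic_mass R \<mu> i) powr \<alpha>)"
    using fin nonneg assms(4,5) by (intro powr_sum_le_sum_powr) (auto simp: I_def dyadic_mass_nonneg)
  finally show ?thesis by (simp add: I_def)
qed

lemma tail_mass_powr_le_dyadic:
  assumes fin: "finite R" and R0: "0 \<notin> R" and nonneg: "\<And>v. v \<in> R \<Longrightarrow> 0 \<le> \<mu> v" and "0 < \<alpha>" "\<alpha> \<le> 1"
  shows "tail_mass R \<mu> (2 powr real_of_int i) powr \<alpha>
    \<le> (\<Sum>i'\<in>{i' \<in> dyadic_index ` R. i \<le> i'}. dyadic_mass R \<mu> i' powr \<alpha>)"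
proof -
  have "i \<le> dyadic_index v" if "v \<in> R" "2 powr real_of_int i < \<bar>v\<bar>" for v
  proof -
    have "v \<noteq> 0" using that R0 by auto
    then have "2 powr real_of_int i < 2 powr real_of_int (dyadic_index v + 1)"
      using dyadic_index_bounds(2)[of v] that(2) by linarith
    then show ?thesis by simp
  qed
  then have "tail_mass R \<mu> (2 powr real_of_int i) \<le> (\<Sum>v\<in>{v\<in>R. i \<le> dyadic_index v}. \<mu> v)"
    unfolding tail_mass_def using fin R0 nonneg by (intro sum_mono2) auto
  also have "\<dots> = (\<Sum>i'\<in>{i' \<in> dyadic_index ` R. i \<le> i'}. \<Sum>v\<in>{v\<in>{v\<in>R. i \<le> dyadic_index v}. dyadic_index v = i'}. \<mu> v)"
    using fin by (intro sum.group[symmetric]) auto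
  also have "\<dots> = (\<Sum>i'\<in>{i' \<in> dyadic_index ` R. i \<le> i'}. dyadic_mass R \<mu> i')"
    unfolding dyadic_mass_def by (intro sum.cong refl arg_cong2[where f=sum]) auto
  finally have "tail_mass R \<mu> (2 powr real_of_int i) powr \<alpha>
      \<le> (\<Sum>i'\<in>{i' \<in> dyadic_index ` R. i \<le> i'}. dyadic_mass R \<mu> i') powr \<alpha>"
    using nonneg assms(4) by (intro powr_mono2) (auto simp: tail_mass_def intro!: sum_nonneg)
  also have "\<dots> \<le> (\<Sum>i'\<in>{i' \<in> dyadic_index ` R. i \<le> i'}. dyadic_mass R \<mu> i' powr \<alpha>)"
    using fin nonneg assms(4,5) by (intro powr_sum_le_sum_powr) (auto simp: dyadic_mass_nonneg)
  finally show ?thesis .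
qed

lemma sum_dyadic_mass_le_moment:
  assumes fin: "finite R" and R0: "0 \<notin> R" and nonneg: "\<And>v. v \<in> R \<Longrightarrow> 0 \<le> \<mu> v" and "0 < p"
  shows "(\<Sum>i\<in>dyadic_index ` R. (2 powr real_of_int i) powr p * dyadic_mass R \<mu> i) \<le> moment R \<mu> p"
proof -
  have "(\<Sum>i\<in>dyadic_index ` R. (2 powr real_of_int i) powr p * dyadic_mass R \<mu> i)
      = (\<Sum>i\<in>dyadic_index ` R. \<Sum>v\<in>{v\<in>R. dyadic_index v = i}. (2 powr real_of_int (dyadic_index v)) powr p * \<mu> v)"
    by (simp add: dyadic_mass_def sum_distrib_left)
  also have "\<dots> \<le> (\<Sum>i\<in>dyadic_index ` R. \<Sum>v\<in>{v\<in>R. dyadic_index v = i}. \<bar>v\<bar> powr p * \<mu> v)"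
    using R0 nonneg assms(4)
    by (intro sum_mono mult_right_mono powr_mono2) (auto intro: less_imp_le dyadic_index_bounds(1))
  also have "\<dots> = moment R \<mu> p"
    unfolding moment_def using fin by (intro sum.group) auto
  finally show ?thesis .
qed

lemma sum_truncation_level_above_le:
  assumes fin: "finite R" and nonneg: "\<And>v. v \<in> R \<Longrightarrow> 0 \<le> \<mu> v" and "1 < \<rho>" "0 < s" "0 < e" "0 \<le> y"
  shows "(\<Sum>k\<in>{k. k < M \<and> y < truncation_level R \<mu> (s * \<rho> ^ k)}. (s * \<rho> ^ k) powr e)
    \<le> tail_mass R \<mu> y powr (e / 2) / (1 - \<rho> powr (-e))"
proof -
  have "0 \<le> tail_mass R \<mu> y" unfolding tail_mass_def using nonneg by (auto intro: sum_nonneg)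
  have "s * \<rho> ^ k < sqrt (tail_mass R \<mu> y)" if "y < truncation_level R \<mu> (s * \<rho> ^ k)" for k
    using tail_mass_gt_below_truncation_level[OF fin \<open>0 \<le> y\<close> that] assms(3,4) by (simp add: real_less_rsqrt)
  then have "(\<Sum>k\<in>{k. k < M \<and> y < truncation_level R \<mu> (s * \<rho> ^ k)}. (s * \<rho> ^ k) powr e)
      \<le> (\<Sum>k\<in>{k. k < M \<and> s * \<rho> ^ k < sqrt (tail_mass R \<mu> y)}. (s * \<rho> ^ k) powr e)"
    by (intro sum_mono2) auto
  also have "\<dots> \<le> sqrt (tail_mass R \<mu> y) powr e / (1 - \<rho> powr (-e))"
    using assms by (intro sum_geometric_powr_below_le)
  finally show ?thesis
    using \<open>0 \<le> tail_mass R \<mu> y\<close> by (simp add: powr_half_sqrt[symmetric] powr_powr)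
qed

lemma dyadic_Young_le:
  fixes i i' :: int and m m' p :: real
  assumes "i \<le> i'" "0 \<le> m" "0 \<le> m'" "1 < p" "p < 2"
  shows "((2 powr real_of_int (i + 1)) powr 2 * m) powr (p / 2) * m' powr (1 - p / 2)
    \<le> 2 powr p * (2 powr (-(p * (1 - p / 2)))) ^ nat (i' - i)
       * ((2 powr real_of_int i) powr p * m + (2 powr real_of_int i') powr p * m')"
proof -
  define \<alpha> where "\<alpha> = p / 2"
  have "0 < \<alpha>" "\<alpha> < 1" using assms by (auto simp: \<alpha>_def)
  define E where "E = (2 powr real_of_int i) powr p * m"
  define E' where "E' = (2 powr real_of_int i') powr p * m'"
  have "0 \<le> E" "0 \<le> E'" using assms by (auto simp: E_def E'_def)
  have t: "(2 powr (-(p * (1 - \<alpha>)))) ^ nat (i' - i) = 2 powr (-(p * (1 - \<alpha>)) * real_of_int (i' - i))"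
    using assms by (simp add: powr_realpow[symmetric] powr_powr)
  have "((2 powr real_of_int (i + 1)) powr 2 * m) powr \<alpha> * m' powr (1 - \<alpha>)
      = 2 powr (2 * real_of_int (i + 1) * \<alpha>) * (m powr \<alpha> * m' powr (1 - \<alpha>))"
    using assms by (simp add: powr_mult powr_powr mult_ac)
  also have "2 * real_of_int (i + 1) * \<alpha> = p + (-(p * (1 - \<alpha>)) * real_of_int (i' - i))
       + (real_of_int i * p * \<alpha> + real_of_int i' * p * (1 - \<alpha>))"
    by (simp add: \<alpha>_def field_simps)
  also have "2 powr (p + (-(p * (1 - \<alpha>)) * real_of_int (i' - i))
       + (real_of_int i * p * \<alpha> + real_of_int i' * p * (1 - \<alpha>))) * (m powr \<alpha> * m' powr (1 - \<alpha>))
     = 2 powr p * 2 powr (-(p * (1 - \<alpha>)) * real_of_int (i' - i)) * (E powr \<alpha> * E' powr (1 - \<alpha>))"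
  proof -
    have "E powr \<alpha> = 2 powr (real_of_int i * p * \<alpha>) * m powr \<alpha>"
      "E' powr (1 - \<alpha>) = 2 powr (real_of_int i' * p * (1 - \<alpha>)) * m' powr (1 - \<alpha>)"
      using assms by (simp_all add: E_def E'_def powr_mult powr_powr)
    then show ?thesis by (simp only: powr_add mult_ac)
  qed
  also have "\<dots> \<le> 2 powr p * 2 powr (-(p * (1 - \<alpha>)) * real_of_int (i' - i)) * (E + E')"
    using Youngs_inequality_nonneg[OF \<open>0 < \<alpha>\<close> \<open>\<alpha> < 1\<close> \<open>0 \<le> E\<close> \<open>0 \<le> E'\<close>] \<open>0 < \<alpha>\<close> \<open>\<alpha> < 1\<close>
      \<open>0 \<le> E\<close> \<open>0 \<le> E'\<close>
    by (intro mult_left_mono) (auto intro: order_trans[OF _ add_mono[OF mult_left_le_one_le mult_left_le_one_le]])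
  finally show ?thesis unfolding t[unfolded \<alpha>_def] E_def E'_def \<alpha>_def .
qed

lemma dyadic_cross_sum_le:
  fixes m :: "int \<Rightarrow> real"
  assumes "finite I" "\<And>i. 0 \<le> m i" "1 < p" "p < 2"
  shows "(\<Sum>i\<in>I. ((2 powr real_of_int (i + 1)) powr 2 * m i) powr (p / 2)
            * (\<Sum>i'\<in>{i'\<in>I. i \<le> i'}. m i' powr (1 - p / 2)))
    \<le> 2 powr p * (2 / (1 - 2 powr (-(p * (1 - p / 2))))) * (\<Sum>i\<in>I. (2 powr real_of_int i) powr p * m i)"
proof -
  define t where "t = (2::real) powr (-(p * (1 - p / 2)))"
  have "0 < t" "t < 1" using assms by (auto simp: t_def powr_less_one)
  define E where "E i = (2 powr real_of_int i) powr p * m i" for i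
  have "0 \<le> E i" for i using assms by (simp add: E_def)
  have geo_above: "(\<Sum>i'\<in>{i'\<in>I. i \<le> i'}. t ^ nat (i' - i)) \<le> 1 / (1 - t)" for i
    using \<open>0 < t\<close> \<open>t < 1\<close> assms(1) by (intro sum_power_inj_on_le) (auto simp: inj_on_def)
  have geo_below: "(\<Sum>i\<in>{i\<in>I. i \<le> i'}. t ^ nat (i' - i)) \<le> 1 / (1 - t)" for i'
    using \<open>0 < t\<close> \<open>t < 1\<close> assms(1) by (intro sum_power_inj_on_le) (auto simp: inj_on_def)
  have "(\<Sum>i\<in>I. ((2 powr real_of_int (i + 1)) powr 2 * m i) powr (p / 2)
            * (\<Sum>i'\<in>{i'\<in>I. i \<le> i'}. m i' powr (1 - p / 2)))
      \<le> (\<Sum>i\<in>I. \<Sum>i'\<in>{i'\<in>I. i \<le> i'}. 2 powr p * (t ^ nat (i' - i) * (E i + E i')))"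
    unfolding sum_distrib_left using dyadic_Young_le assms
    by (intro sum_mono) (simp add: E_def t_def mult.assoc)
  also have "\<dots> = 2 powr p * ((\<Sum>i\<in>I. E i * (\<Sum>i'\<in>{i'\<in>I. i \<le> i'}. t ^ nat (i' - i)))
      + (\<Sum>i\<in>I. \<Sum>i'\<in>{i'\<in>I. i \<le> i'}. t ^ nat (i' - i) * E i'))"
    by (simp only: distrib_left sum.distrib sum_distrib_left) (simp add: mult_ac)
  also have "(\<Sum>i\<in>I. \<Sum>i'\<in>{i'\<in>I. i \<le> i'}. t ^ nat (i' - i) * E i')
      = (\<Sum>i'\<in>I. E i' * (\<Sum>i\<in>{i\<in>I. i \<le> i'}. t ^ nat (i' - i)))"
    using sum.swap_restrict[of I I "\<lambda>i i'. t ^ nat (i' - i) * E i'" "\<lambda>i i'. i \<le> i'"] assms(1)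
    by (simp add: sum_distrib_left mult.commute)
  also have "2 powr p * ((\<Sum>i\<in>I. E i * (\<Sum>i'\<in>{i'\<in>I. i \<le> i'}. t ^ nat (i' - i)))
      + (\<Sum>i'\<in>I. E i' * (\<Sum>i\<in>{i\<in>I. i \<le> i'}. t ^ nat (i' - i))))
    \<le> 2 powr p * ((\<Sum>i\<in>I. E i * (1 / (1 - t))) + (\<Sum>i'\<in>I. E i' * (1 / (1 - t))))"
    using geo_above geo_below \<open>\<And>i. 0 \<le> E i\<close>
    by (intro mult_left_mono add_mono sum_mono) auto
  also have "\<dots> = 2 powr p * (2 / (1 - t)) * (\<Sum>i\<in>I. E i)"
    by (simp add: sum_distrib_right[symmetric] sum_divide_distrib[symmetric] algebra_simps)
  finally show ?thesis by (simp add: E_def t_def)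
qed

lemma sum_scales_above_dyadic_le:
  assumes fin: "finite R" and R0: "0 \<notin> R" and nonneg: "\<And>v. v \<in> R \<Longrightarrow> 0 \<le> \<mu> v"
    and "1 < \<rho>" "0 < s" "0 < e" "e < 2"
  shows "(\<Sum>k\<in>{k. k < M \<and> 2 powr real_of_int i < truncation_level R \<mu> (s * \<rho> ^ k)}. (s * \<rho> ^ k) powr e)
    \<le> 1 / (1 - \<rho> powr (-e)) * (\<Sum>i'\<in>{i' \<in> dyadic_index ` R. i \<le> i'}. dyadic_mass R \<mu> i' powr (e / 2))"
proof -
  have "0 < 1 / (1 - \<rho> powr (-e))" using assms(4,6) by (simp add: powr_less_one)
  have "(\<Sum>k\<in>{k. k < M \<and> 2 powr real_of_int i < truncation_level R \<mu> (s * \<rho> ^ k)}. (s * \<rho> ^ k) powr e)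
      \<le> 1 / (1 - \<rho> powr (-e)) * tail_mass R \<mu> (2 powr real_of_int i) powr (e / 2)"
    using sum_truncation_level_above_le[OF fin nonneg assms(4-6), where y="2 powr real_of_int i"] by simp
  also have "\<dots> \<le> 1 / (1 - \<rho> powr (-e)) * (\<Sum>i'\<in>{i' \<in> dyadic_index ` R. i \<le> i'}. dyadic_mass R \<mu> i' powr (e / 2))"
    using fin R0 nonneg assms(6,7) \<open>0 < 1 / (1 - \<rho> powr (-e))\<close>
    by (intro mult_left_mono tail_mass_powr_le_dyadic) auto
  finally show ?thesis .
qed

text \<open>By subadditivity of \<open>t \<mapsto> t\<^bsup>p/2\<^esup>\<close> the small values are handled block by dyadic block;
  after exchanging the sums, block \<open>i\<close> only meets the scales \<open>\<sigma>\<close> with \<open>\<sigma>\<^sup>2\<close> below the tail mass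
  at \<open>2\<^sup>i\<close>, and these form a geometric series.\<close>
lemma sum_head_L2sq_truncation_level_le:
  fixes R :: "real set" and \<mu> :: "real \<Rightarrow> real"
  assumes fin: "finite R" and R0: "0 \<notin> R" and nonneg: "\<And>v. v \<in> R \<Longrightarrow> 0 \<le> \<mu> v"
    and "1 < \<rho>" "0 < s" "0 < \<theta>" "\<theta> < 1"
  defines "p \<equiv> 2 / (2 - \<theta>)"
  shows "(\<Sum>k<M. (s * \<rho> ^ k) powr (2 - p) * head_L2sq R \<mu> (truncation_level R \<mu> (s * \<rho> ^ k)) powr (p / 2))
    \<le> 1 / (1 - \<rho> powr (-(2 - p))) * (2 powr p * (2 / (1 - 2 powr (-(p * (1 - p / 2))))))
       * moment R \<mu> p"
proof -
  have "1 < p" "p < 2" using assms(6,7) by (auto simp: p_def field_simps)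
  define \<sigma> where "\<sigma> k = s * \<rho> ^ k" for k
  define I where "I = dyadic_index ` R"
  define m where "m = dyadic_mass R \<mu>"
  define F where "F i = ((2 powr real_of_int (i + 1)) powr 2 * m i) powr (p / 2)" for i
  define G where "G = 1 / (1 - \<rho> powr (-(2 - p)))"
  have "finite I" "0 < G" "\<And>i. 0 \<le> m i"
    using fin R0 assms(4) \<open>p < 2\<close> nonneg by (auto simp: I_def G_def m_def powr_less_one dyadic_mass_nonneg)
  have "(\<Sum>k<M. \<sigma> k powr (2 - p) * head_L2sq R \<mu> (truncation_level R \<mu> (\<sigma> k)) powr (p / 2))
      \<le> (\<Sum>k<M. \<Sum>i\<in>{i\<in>I. 2 powr real_of_int i < truncation_level R \<mu> (\<sigma> k)}. \<sigma> k powr (2 - p) * F i)"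
    unfolding sum_distrib_left[symmetric] F_def I_def m_def using fin R0 nonneg \<open>1 < p\<close> \<open>p < 2\<close>
    by (intro sum_mono mult_left_mono head_L2sq_powr_le_dyadic) auto
  also have "\<dots> = (\<Sum>i\<in>I. F i * (\<Sum>k\<in>{k. k < M \<and> 2 powr real_of_int i < truncation_level R \<mu> (\<sigma> k)}. \<sigma> k powr (2 - p)))"
    using sum.swap_restrict[of "{..<M}" I "\<lambda>k i. \<sigma> k powr (2 - p) * F i"
        "\<lambda>k i. 2 powr real_of_int i < truncation_level R \<mu> (\<sigma> k)"] \<open>finite I\<close>
    by (simp add: sum_distrib_left mult.commute)
  also have "\<dots> \<le> (\<Sum>i\<in>I. F i * (G * (\<Sum>i'\<in>{i'\<in>I. i \<le> i'}. m i' powr (1 - p / 2))))"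
    using sum_scales_above_dyadic_le[OF fin R0 nonneg assms(4,5), where e="2 - p"] \<open>1 < p\<close> \<open>p < 2\<close>
    by (intro sum_mono mult_left_mono) (auto simp: F_def \<sigma>_def G_def I_def m_def diff_divide_distrib)
  also have "\<dots> = G * (\<Sum>i\<in>I. F i * (\<Sum>i'\<in>{i'\<in>I. i \<le> i'}. m i' powr (1 - p / 2)))"
    unfolding sum_distrib_left by (intro sum.cong refl) (simp only: mult.left_commute)
  also have "\<dots> \<le> G * (2 powr p * (2 / (1 - 2 powr (-(p * (1 - p / 2))))) * moment R \<mu> p)"
  proof (intro mult_left_mono)
    have "0 \<le> 2 powr p * (2 / (1 - 2 powr (-(p * (1 - p / 2)))))"
      using \<open>1 < p\<close> \<open>p < 2\<close> by (simp add: powr_less_one less_imp_le)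
    have "(\<Sum>i\<in>I. F i * (\<Sum>i'\<in>{i'\<in>I. i \<le> i'}. m i' powr (1 - p / 2)))
        \<le> 2 powr p * (2 / (1 - 2 powr (-(p * (1 - p / 2))))) * (\<Sum>i\<in>I. (2 powr real_of_int i) powr p * m i)"
      unfolding F_def by (rule dyadic_cross_sum_le) (use \<open>finite I\<close> \<open>\<And>i. 0 \<le> m i\<close> \<open>1 < p\<close> \<open>p < 2\<close> in auto)
    also have "\<dots> \<le> 2 powr p * (2 / (1 - 2 powr (-(p * (1 - p / 2))))) * moment R \<mu> p"
      unfolding I_def m_def using fin R0 nonneg \<open>1 < p\<close> \<open>0 \<le> 2 powr p * _\<close>
      by (intro mult_left_mono sum_dyadic_mass_le_moment) auto
    finally show "(\<Sum>i\<in>I. F i * (\<Sum>i'\<in>{i'\<in>I. i \<le> i'}. m i' powr (1 - p / 2)))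
        \<le> 2 powr p * (2 / (1 - 2 powr (-(p * (1 - p / 2))))) * moment R \<mu> p" .
  qed (use \<open>0 < G\<close> in simp)
  finally show ?thesis by (simp add: \<sigma>_def G_def mult.assoc)
qed

section \<open>Truncation at geometric scales\<close>

text \<open>Up to a constant factor, this bounds the contribution of a single dyadic annulus of scale \<open>\<sigma>\<close>
  (see \<open>nn_integral_annulus_le\<close>).\<close>
definition truncation_cost :: "real set \<Rightarrow> (real \<Rightarrow> real) \<Rightarrow> real \<Rightarrow> real \<Rightarrow> real" where
  "truncation_cost R \<mu> \<theta> \<sigma> =
     (let p = 2 / (2 - \<theta>); l = truncation_level R \<mu> \<sigma>
      in (\<sigma> powr (-\<theta>) * tail_L1 R \<mu> l) powr p + \<sigma> powr (2 - p) * head_L2sq R \<mu> l powr (p / 2))"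

lemma truncation_cost_nonneg: "0 \<le> truncation_cost R \<mu> \<theta> \<sigma>"
  by (simp add: truncation_cost_def Let_def)

definition truncation_const :: "real \<Rightarrow> real \<Rightarrow> real" where
  "truncation_const \<rho> \<theta> =
     (let r = max \<rho> (1 / \<rho>); p = 2 / (2 - \<theta>)
      in (1 / (1 - r powr (-\<theta>))) powr p
         + 1 / (1 - r powr (-(2 - p))) * (2 powr p * (2 / (1 - 2 powr (-(p * (1 - p / 2)))))))"

lemma truncation_const_nonneg:
  assumes "0 < \<rho>" "0 < \<theta>" "\<theta> < 1"
  shows "0 \<le> truncation_const \<rho> \<theta>"
proof -
  define r where "r = max \<rho> (1 / \<rho>)"
  define p where "p = 2 / (2 - \<theta>)"
  have "1 \<le> r" using assms(1) by (cases "1 \<le> \<rho>") (auto simp: r_def le_max_iff_disj le_divide_eq_1)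
  have "1 < p" "p < 2" using assms(2,3) by (auto simp: p_def field_simps)
  have "r powr (-(2 - p)) \<le> r powr 0" using \<open>1 \<le> r\<close> \<open>p < 2\<close> by (intro powr_mono) auto
  moreover have "(2::real) powr (-(p * (1 - p / 2))) < 1"
    using \<open>1 < p\<close> \<open>p < 2\<close> by (simp add: powr_less_one)
  ultimately show ?thesis
    using \<open>1 \<le> r\<close> by (simp add: truncation_const_def r_def[symmetric] p_def[symmetric] Let_def)
qed

lemma sum_truncation_cost_increasing_le:
  fixes R :: "real set" and \<mu> :: "real \<Rightarrow> real"
  assumes "finite R" "0 \<notin> R" "\<And>v. v \<in> R \<Longrightarrow> 0 \<le> \<mu> v" "1 < \<rho>" "0 < s" "0 < \<theta>" "\<theta> < 1"
  shows "(\<Sum>k<M. truncation_cost R \<mu> \<theta> (s * \<rho> ^ k)) \<le> truncation_const \<rho> \<theta> * moment R \<mu> (2 / (2 - \<theta>))"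
proof -
  define p where "p = 2 / (2 - \<theta>)"
  have "1 / \<rho> < \<rho>" using assms(4) by (smt (verit) divide_less_eq_1)
  then have "max \<rho> (1 / \<rho>) = \<rho>" by simp
  have "(\<Sum>k<M. truncation_cost R \<mu> \<theta> (s * \<rho> ^ k))
      = (\<Sum>k<M. ((s * \<rho> ^ k) powr (-\<theta>) * tail_L1 R \<mu> (truncation_level R \<mu> (s * \<rho> ^ k))) powr p)
        + (\<Sum>k<M. (s * \<rho> ^ k) powr (2 - p) * head_L2sq R \<mu> (truncation_level R \<mu> (s * \<rho> ^ k)) powr (p / 2))"
    by (simp add: truncation_cost_def p_def Let_def sum.distrib)
  also have "\<dots> \<le> (1 / (1 - \<rho> powr (-\<theta>))) powr p * moment R \<mu> p
      + 1 / (1 - \<rho> powr (-(2 - p))) * (2 powr p * (2 / (1 - 2 powr (-(p * (1 - p / 2)))))) * moment R \<mu> p"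
    unfolding p_def using assms by (intro add_mono sum_tail_L1_truncation_level_le sum_head_L2sq_truncation_level_le) auto
  finally show ?thesis
    using \<open>max \<rho> (1 / \<rho>) = \<rho>\<close> by (simp add: truncation_const_def p_def Let_def distrib_right)
qed

lemma sum_truncation_cost_geometric_le:
  fixes R :: "real set" and \<mu> :: "real \<Rightarrow> real"
  assumes "finite R" "0 \<notin> R" "\<And>v. v \<in> R \<Longrightarrow> 0 \<le> \<mu> v" "0 < \<rho>" "\<rho> \<noteq> 1" "0 < s" "0 < \<theta>" "\<theta> < 1"
  shows "(\<Sum>k<M. truncation_cost R \<mu> \<theta> (s * \<rho> ^ k)) \<le> truncation_const \<rho> \<theta> * moment R \<mu> (2 / (2 - \<theta>))"
proof (cases "1 < \<rho>")
  case True
  with assms show ?thesis by (intro sum_truncation_cost_increasing_le) auto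
next
  case False
  with assms(4,5) have "1 < 1 / \<rho>" by simp
  \<comment> \<open>a decreasing geometric sequence is an increasing one read backwards\<close>
  have reidx: "s * \<rho> ^ (M - Suc j) = s * \<rho> ^ (M - 1) * (1 / \<rho>) ^ j" if "j < M" for j
  proof -
    have "\<rho> ^ (M - 1) = \<rho> ^ (M - Suc j) * \<rho> ^ j" using that by (simp flip: power_add)
    then show ?thesis using assms(4) by (simp add: power_one_over)
  qed
  have "(\<Sum>k<M. truncation_cost R \<mu> \<theta> (s * \<rho> ^ k))
      = (\<Sum>j<M. truncation_cost R \<mu> \<theta> (s * \<rho> ^ (M - Suc j)))"
    by (rule sum.nat_diff_reindex[symmetric])
  also have "\<dots> = (\<Sum>j<M. truncation_cost R \<mu> \<theta> (s * \<rho> ^ (M - 1) * (1 / \<rho>) ^ j))"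
    using reidx by (intro sum.cong refl) (simp only: lessThan_iff)
  also have "\<dots> \<le> truncation_const (1 / \<rho>) \<theta> * moment R \<mu> (2 / (2 - \<theta>))"
    using assms \<open>1 < 1 / \<rho>\<close> by (intro sum_truncation_cost_increasing_le) auto
  also have "truncation_const (1 / \<rho>) \<theta> = truncation_const \<rho> \<theta>"
    by (simp add: truncation_const_def max.commute)
  finally show ?thesis .
qed


definition nonzero_values :: "'a measure \<Rightarrow> ('a \<Rightarrow> real) \<Rightarrow> real set" where
  "nonzero_values M f = f ` space M - {0}"

definition value_measure :: "'a measure \<Rightarrow> ('a \<Rightarrow> real) \<Rightarrow> real \<Rightarrow> real" where
  "value_measure M f v = measure M {y \<in> space M. f y = v}"

lemma value_measure_nonneg [simp]: "0 \<le> value_measure M f v"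
  by (simp add: value_measure_def)

lemma simple_fun_nonzero_values:
  assumes "simple_fun M f"
  shows "finite (nonzero_values M f)" "0 \<notin> nonzero_values M f"
    and "v \<in> nonzero_values M f \<Longrightarrow> {y \<in> space M. f y = v} \<in> sets M"
    and "v \<in> nonzero_values M f \<Longrightarrow> emeasure M {y \<in> space M. f y = v} = ennreal (value_measure M f v)"
proof -
  have sf: "simple_function M f" and fin: "emeasure M {y \<in> space M. f y \<noteq> 0} < \<infinity>"
    using assms by (auto simp: simple_fun_def)
  show "finite (nonzero_values M f)" "0 \<notin> nonzero_values M f"
    using sf by (auto simp: nonzero_values_def simple_function_def)
  assume v: "v \<in> nonzero_values M f"
  then obtain x where "x \<in> space M" "v = f x" by (auto simp: nonzero_values_def)
  then have "{y \<in> space M. f y = v} = f -` {f x} \<inter> space M" by auto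
  then show meas: "{y \<in> space M. f y = v} \<in> sets M"
    using sf \<open>x \<in> space M\<close> by (simp add: simple_function_def)
  have "{y \<in> space M. f y \<noteq> 0} \<in> sets M"
    using borel_measurable_simple_function[OF sf] by measurable
  then have "emeasure M {y \<in> space M. f y = v} \<le> emeasure M {y \<in> space M. f y \<noteq> 0}"
    using v by (intro emeasure_mono) (auto simp: nonzero_values_def)
  with fin have "emeasure M {y \<in> space M. f y = v} \<noteq> \<infinity>" by (auto simp: top_unique)
  then show "emeasure M {y \<in> space M. f y = v} = ennreal (value_measure M f v)"
    by (simp add: value_measure_def emeasure_eq_ennreal_measure)
qed

lemma simple_fun_compose:
  assumes "simple_fun M f" "g 0 = 0"
  shows "simple_fun M (\<lambda>y. g (f y))"
proof -
  have sf: "simple_function M f" and fin: "emeasure M {y \<in> space M. f y \<noteq> 0} < \<infinity>"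
    using assms(1) by (auto simp: simple_fun_def)
  have "{y \<in> space M. f y \<noteq> 0} \<in> sets M"
    using borel_measurable_simple_function[OF sf] by measurable
  then have "emeasure M {y \<in> space M. g (f y) \<noteq> 0} \<le> emeasure M {y \<in> space M. f y \<noteq> 0}"
    using assms(2) by (intro emeasure_mono) auto
  then show ?thesis
    using simple_function_compose1[OF sf] fin by (auto simp: simple_fun_def)
qed

lemma nn_integral_simple_fun_powr:
  assumes sf: "simple_fun M f" and "0 < q"
  shows "(\<integral>\<^sup>+ y. ennreal (if P (f y) then \<bar>f y\<bar> powr q else 0) \<partial>M)
       = ennreal (\<Sum>v\<in>{v \<in> nonzero_values M f. P v}. \<bar>v\<bar> powr q * value_measure M f v)"
proof -
  note vals = simple_fun_nonzero_values[OF sf]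
  define S where "S = {v \<in> nonzero_values M f. P v}"
  define L where "L v = {y \<in> space M. f y = v}" for v
  have "finite S" using vals(1) by (simp add: S_def)
  have pointwise: "ennreal (if P (f y) then \<bar>f y\<bar> powr q else 0)
      = (\<Sum>v\<in>S. ennreal (\<bar>v\<bar> powr q) * indicator (L v) y)" if "y \<in> space M" for y
  proof (cases "f y \<noteq> 0 \<and> P (f y)")
    case True
    then have "f y \<in> S" using that by (auto simp: S_def nonzero_values_def)
    then have "(\<Sum>v\<in>S. ennreal (\<bar>v\<bar> powr q) * indicator (L v) y)
        = (\<Sum>v\<in>{f y}. ennreal (\<bar>v\<bar> powr q) * indicator (L v) y)"
      using \<open>finite S\<close> by (intro sum.mono_neutral_right) (auto simp: L_def indicator_def that)
    then show ?thesis using True that by (simp add: L_def indicator_def)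
  next
    case False
    then have "(\<Sum>v\<in>S. ennreal (\<bar>v\<bar> powr q) * indicator (L v) y) = 0"
      by (intro sum.neutral) (auto simp: L_def indicator_def S_def nonzero_values_def)
    then show ?thesis using False \<open>0 < q\<close> by auto
  qed
  have "(\<integral>\<^sup>+ y. ennreal (if P (f y) then \<bar>f y\<bar> powr q else 0) \<partial>M)
      = (\<integral>\<^sup>+ y. (\<Sum>v\<in>S. ennreal (\<bar>v\<bar> powr q) * indicator (L v) y) \<partial>M)"
    using pointwise by (intro nn_integral_cong) auto
  also have "\<dots> = (\<Sum>v\<in>S. \<integral>\<^sup>+ y. ennreal (\<bar>v\<bar> powr q) * indicator (L v) y \<partial>M)"
    using vals(3) by (intro nn_integral_sum) (auto simp: S_def L_def)
  also have "\<dots> = (\<Sum>v\<in>S. ennreal (\<bar>v\<bar> powr q * value_measure M f v))"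
    using vals(3,4) by (intro sum.cong refl)
      (auto simp: S_def L_def nn_integral_cmult_indicator ennreal_mult)
  also have "\<dots> = ennreal (\<Sum>v\<in>S. \<bar>v\<bar> powr q * value_measure M f v)"
    by (intro sum_ennreal) auto
  finally show ?thesis by (simp add: S_def)
qed

lemma Lp_norm_eq_ennreal:
  assumes "(\<integral>\<^sup>+ x. ennreal (\<bar>g x\<bar> powr q) \<partial>M) = ennreal I" "0 \<le> I"
  shows "Lp_norm M q g = ennreal (I powr (1 / q))"
  using assms by (simp add: Lp_norm_def Let_def)

lemma Lp_norm_simple_fun:
  assumes "simple_fun M f" "0 < q"
  shows "Lp_norm M q f = ennreal (moment (nonzero_values M f) (value_measure M f) q powr (1 / q))"
  using nn_integral_simple_fun_powr[OF assms, of "\<lambda>_. True"]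
  by (intro Lp_norm_eq_ennreal) (auto simp: moment_def intro: sum_nonneg)

lemma Lp_norm_upper_truncation:
  assumes "simple_fun M f"
  shows "Lp_norm M 1 (\<lambda>y. if l < \<bar>f y\<bar> then f y else 0)
    = ennreal (tail_L1 (nonzero_values M f) (value_measure M f) l)"
proof -
  have "(\<integral>\<^sup>+ y. ennreal (\<bar>if l < \<bar>f y\<bar> then f y else 0\<bar> powr 1) \<partial>M)
      = (\<integral>\<^sup>+ y. ennreal (if l < \<bar>f y\<bar> then \<bar>f y\<bar> powr 1 else 0) \<partial>M)"
    by (intro nn_integral_cong) auto
  also have "\<dots> = ennreal (tail_L1 (nonzero_values M f) (value_measure M f) l)"
    using nn_integral_simple_fun_powr[OF assms, of 1 "\<lambda>z. l < \<bar>z\<bar>"] by (simp add: tail_L1_def)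
  finally have "(\<integral>\<^sup>+ y. ennreal (\<bar>if l < \<bar>f y\<bar> then f y else 0\<bar> powr 1) \<partial>M)
      = ennreal (tail_L1 (nonzero_values M f) (value_measure M f) l)" .
  moreover have "0 \<le> tail_L1 (nonzero_values M f) (value_measure M f) l"
    by (auto simp: tail_L1_def intro: sum_nonneg)
  ultimately show ?thesis using Lp_norm_eq_ennreal by fastforce
qed

lemma Lp_norm_lower_truncation:
  assumes "simple_fun M f"
  shows "Lp_norm M 2 (\<lambda>y. if l < \<bar>f y\<bar> then 0 else f y)
    = ennreal (head_L2sq (nonzero_values M f) (value_measure M f) l powr (1 / 2))"
proof (rule Lp_norm_eq_ennreal)
  have "(\<integral>\<^sup>+ y. ennreal (\<bar>if l < \<bar>f y\<bar> then 0 else f y\<bar> powr 2) \<partial>M)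
      = (\<integral>\<^sup>+ y. ennreal (if \<bar>f y\<bar> \<le> l then \<bar>f y\<bar> powr 2 else 0) \<partial>M)"
    by (intro nn_integral_cong) auto
  also have "\<dots> = ennreal (head_L2sq (nonzero_values M f) (value_measure M f) l)"
    using nn_integral_simple_fun_powr[OF assms, of 2 "\<lambda>z. \<bar>z\<bar> \<le> l"] by (simp add: head_L2sq_def)
  finally show "(\<integral>\<^sup>+ y. ennreal (\<bar>if l < \<bar>f y\<bar> then 0 else f y\<bar> powr 2) \<partial>M)
      = ennreal (head_L2sq (nonzero_values M f) (value_measure M f) l)" .
qed (auto simp: head_L2sq_def intro: sum_nonneg)

lemma nn_integral_powr_le_of_Lp_norm_le:
  assumes "Lp_norm M q h \<le> ennreal c" "0 \<le> c" "0 < q"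
  shows "(\<integral>\<^sup>+ x. ennreal (\<bar>h x\<bar> powr q) \<partial>M) \<le> ennreal (c powr q)"
proof -
  define I where "I = (\<integral>\<^sup>+ x. ennreal (\<bar>h x\<bar> powr q) \<partial>M)"
  have "I \<noteq> \<infinity>"
    using assms(1) by (auto simp: Lp_norm_def I_def[symmetric] top_unique)
  then have "enn2real I powr (1 / q) \<le> c"
    using assms by (simp add: Lp_norm_def I_def[symmetric] Let_def ennreal_le_iff)
  then have "(enn2real I powr (1 / q)) powr q \<le> c powr q"
    using assms(3) by (intro powr_mono2) auto
  then have "ennreal (enn2real I) \<le> ennreal (c powr q)"
    using assms(3) by (intro ennreal_leI) (simp add: powr_powr)
  moreover have "ennreal (enn2real I) = I" using \<open>I \<noteq> \<infinity>\<close> by (simp add: less_top)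
  ultimately show ?thesis by (simp only: I_def)
qed

lemma AE_abs_le_of_Linf_norm_le:
  assumes "Linf_norm M h \<le> ennreal c" "0 \<le> c"
  shows "AE x in M. \<bar>h x\<bar> \<le> c"
  using esssup_AE[of "\<lambda>x. ennreal \<bar>h x\<bar>" M]
proof (rule eventually_mono)
  fix x assume "ennreal \<bar>h x\<bar> \<le> esssup M (\<lambda>x. ennreal \<bar>h x\<bar>)"
  also have "\<dots> \<le> ennreal c" using assms(1) by (simp add: Linf_norm_def)
  finally show "\<bar>h x\<bar> \<le> c" using assms(2) by (simp add: ennreal_le_iff)
qed

lemma Lp_norm_le_of_nn_integral_le:
  assumes "(\<integral>\<^sup>+ x. ennreal (\<bar>g x\<bar> powr q) \<partial>M) \<le> ennreal W" "0 \<le> W" "0 < q"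
  shows "Lp_norm M q g \<le> ennreal (W powr (1 / q))"
proof -
  define J where "J = (\<integral>\<^sup>+ x. ennreal (\<bar>g x\<bar> powr q) \<partial>M)"
  have "J \<noteq> \<infinity>" using assms(1) by (auto simp: J_def top_unique)
  have "enn2real J \<le> W" using assms(1,2) by (simp add: J_def[symmetric] enn2real_leI)
  then have "enn2real J powr (1 / q) \<le> W powr (1 / q)"
    using assms(3) by (intro powr_mono2) auto
  then show ?thesis
    using \<open>J \<noteq> \<infinity>\<close> by (simp add: Lp_norm_def J_def[symmetric] Let_def)
qed

section \<open>Weighted estimates on dyadic annuli\<close>

lemma norm_powr_measurable_lebesgue [measurable]:
  "(\<lambda>x::'a::euclidean_space. norm x powr e) \<in> borel_measurable lebesgue"
proof -
  have "(\<lambda>x::'a. norm x powr e) \<in> borel_measurable lborel" by simp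
  then show ?thesis by (rule measurable_completion)
qed

definition annulus :: "int \<Rightarrow> 'a::euclidean_space set" where
  "annulus k = {x. 2 powr real_of_int k \<le> norm x \<and> norm x < 2 powr real_of_int (k + 1)}"

lemma annulus_sets_lebesgue [measurable]: "annulus k \<in> sets (lebesgue :: 'a::euclidean_space measure)"
proof -
  have "annulus k \<in> sets (borel :: 'a measure)" unfolding annulus_def by measurable
  then show ?thesis by (simp add: sets_completionI_sets)
qed

lemma norm_pos_of_mem_annulus: "x \<in> annulus k \<Longrightarrow> 0 < norm x"
  unfolding annulus_def by (smt (verit) mem_Collect_eq powr_gt_zero)

lemma annulus_disjoint:
  assumes "x \<in> annulus k" "x \<in> annulus k'"
  shows "k = k'"
proof -
  have "2 powr real_of_int k < 2 powr real_of_int (k' + 1)" "2 powr real_of_int k' < 2 powr real_of_int (k + 1)"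
    using assms unfolding annulus_def mem_Collect_eq by linarith+
  then have "real_of_int k < real_of_int (k' + 1)" "real_of_int k' < real_of_int (k + 1)"
    by (simp_all only: powr_less_cancel_iff one_less_numeral_iff semiring_norm(76))
  then show ?thesis by linarith
qed

lemma mem_annulus_floor_log: "x \<noteq> 0 \<Longrightarrow> x \<in> annulus \<lfloor>log 2 (norm x)\<rfloor>"
proof -
  assume "x \<noteq> 0"
  then have "2 powr (log 2 (norm x)) = norm x" by simp
  moreover have "2 powr real_of_int \<lfloor>log 2 (norm x)\<rfloor> \<le> 2 powr (log 2 (norm x))"
    by (intro powr_mono) auto
  moreover have "2 powr (log 2 (norm x)) < 2 powr real_of_int (\<lfloor>log 2 (norm x)\<rfloor> + 1)"
    by (intro powr_less_mono) linarith+
  ultimately show ?thesis by (simp add: annulus_def)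
qed

definition annulus_const :: "nat \<Rightarrow> real \<Rightarrow> real" where
  "annulus_const n e = max 1 (2 powr e) * 2 powr real n * unit_ball_vol (real n)"

lemma annulus_const_pos: "0 < annulus_const n e"
  by (simp add: annulus_const_def)

lemma nn_integral_annulus_norm_powr_le:
  "(\<integral>\<^sup>+ x. indicator (annulus k) x * ennreal (norm (x::'a::euclidean_space) powr e) \<partial>lebesgue)
     \<le> ennreal (annulus_const DIM('a) e * 2 powr (real_of_int k * (e + real DIM('a))))"
proof -
  define r where "r = (2::real) powr real_of_int (k + 1)"
  define c where "c = 2 powr (real_of_int k * e) * max 1 (2 powr e)"
  have "0 < r" "0 \<le> c" by (simp_all add: r_def c_def)
  \<comment> \<open>on the annulus, \<open>norm x powr e\<close> is at most its value at the inner or the outer radius\<close>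
  have "norm x powr e \<le> c" if "x \<in> annulus k" for x :: 'a
  proof (cases "0 \<le> e")
    case True
    have "norm x < r" using that by (simp add: annulus_def r_def)
    then have "norm x powr e \<le> r powr e" using True by (intro powr_mono2) auto
    also have "\<dots> = 2 powr (real_of_int k * e) * 2 powr e"
      by (simp add: r_def powr_powr powr_add[symmetric] algebra_simps)
    finally show ?thesis
      unfolding c_def by (metis max.cobounded2 mult_left_mono order_trans powr_ge_zero)
  next
    case False
    have "2 powr real_of_int k \<le> norm x" using that by (simp add: annulus_def)
    then have "norm x powr e \<le> (2 powr real_of_int k) powr e" using False by (intro powr_mono2') auto
    then show ?thesis
      unfolding c_def by (metis max.cobounded1 mult.right_neutral mult_left_mono order_trans
          powr_ge_zero powr_powr)
  qed
  moreover have "annulus k \<subseteq> cball (0::'a) r" by (auto simp: annulus_def r_def)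
  ultimately have "indicator (annulus k) x * ennreal (norm x powr e) \<le> ennreal c * indicator (cball 0 r) x"
    for x :: 'a
    by (cases "x \<in> annulus k") (auto simp: indicator_def intro: ennreal_leI)
  then have "(\<integral>\<^sup>+ x. indicator (annulus k) x * ennreal (norm (x::'a) powr e) \<partial>lebesgue)
      \<le> (\<integral>\<^sup>+ x. ennreal c * indicator (cball (0::'a) r) x \<partial>lebesgue)"
    by (rule nn_integral_mono)
  also have "\<dots> = ennreal (c * (unit_ball_vol (real DIM('a)) * r ^ DIM('a)))"
    using \<open>0 < r\<close> \<open>0 \<le> c\<close> by (simp add: nn_integral_cmult_indicator emeasure_cball ennreal_mult)
  also have "c * (unit_ball_vol (real DIM('a)) * r ^ DIM('a))
      = annulus_const DIM('a) e * 2 powr (real_of_int k * (e + real DIM('a)))"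
    by (simp add: c_def r_def annulus_const_def powr_realpow[symmetric] powr_powr
        powr_add[symmetric] algebra_simps)
  finally show ?thesis .
qed

lemma nn_integral_Holder_le:
  fixes F G :: "'a \<Rightarrow> real"
  assumes "F \<in> borel_measurable M" "G \<in> borel_measurable M" "\<And>x. 0 \<le> F x" "\<And>x. 0 \<le> G x"
    and IF: "(\<integral>\<^sup>+ x. ennreal (F x) \<partial>M) \<le> ennreal a" and IG: "(\<integral>\<^sup>+ x. ennreal (G x) \<partial>M) \<le> ennreal b"
    and "0 \<le> a" "0 \<le> b" "0 < \<alpha>" "\<alpha> < 1"
  shows "(\<integral>\<^sup>+ x. ennreal (F x powr \<alpha> * G x powr (1 - \<alpha>)) \<partial>M) \<le> ennreal (a powr \<alpha> * b powr (1 - \<alpha>))"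
proof (cases "a = 0 \<or> b = 0")
  case True
  then have "AE x in M. F x = 0 \<or> G x = 0"
    using IF IG assms(1-4) by (auto simp: nn_integral_0_iff_AE elim: AE_mp)
  then have "AE x in M. ennreal (F x powr \<alpha> * G x powr (1 - \<alpha>)) = 0"
    by eventually_elim (use \<open>\<alpha> < 1\<close> in auto)
  then have "(\<integral>\<^sup>+ x. ennreal (F x powr \<alpha> * G x powr (1 - \<alpha>)) \<partial>M) = (\<integral>\<^sup>+ x. 0 \<partial>M)"
    by (rule nn_integral_cong_AE)
  then show ?thesis by simp
next
  case False
  with assms(7,8) have "0 < a" "0 < b" by auto
  define K where "K = a powr \<alpha> * b powr (1 - \<alpha>)"
  have "0 \<le> K" by (simp add: K_def)
  \<comment> \<open>Young's inequality after normalising \<open>F\<close> by \<open>a\<close> and \<open>G\<close> by \<open>b\<close>\<close>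
  have "F x powr \<alpha> * G x powr (1 - \<alpha>) \<le> K * (\<alpha> / a * F x + (1 - \<alpha>) / b * G x)" for x
  proof -
    have "F x powr \<alpha> * G x powr (1 - \<alpha>) = K * ((F x / a) powr \<alpha> * (G x / b) powr (1 - \<alpha>))"
      using \<open>0 < a\<close> \<open>0 < b\<close> assms(3,4) by (simp add: K_def powr_divide)
    also have "\<dots> \<le> K * (\<alpha> * (F x / a) + (1 - \<alpha>) * (G x / b))"
      using Youngs_inequality_nonneg[of \<alpha> "F x / a" "G x / b"] assms(3,4,9,10) \<open>0 < a\<close> \<open>0 < b\<close> \<open>0 \<le> K\<close>
      by (intro mult_left_mono) auto
    finally show ?thesis by simp
  qed
  then have "(\<integral>\<^sup>+ x. ennreal (F x powr \<alpha> * G x powr (1 - \<alpha>)) \<partial>M)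
      \<le> (\<integral>\<^sup>+ x. ennreal K * (ennreal (\<alpha> / a) * ennreal (F x) + ennreal ((1 - \<alpha>) / b) * ennreal (G x)) \<partial>M)"
    using \<open>0 \<le> K\<close> \<open>0 < a\<close> \<open>0 < b\<close> assms(3,4,9,10)
    by (intro nn_integral_mono)
      (simp add: ennreal_mult[symmetric] ennreal_plus[symmetric] ennreal_leI del: ennreal_plus)
  also have "\<dots> = ennreal K * (ennreal (\<alpha> / a) * (\<integral>\<^sup>+ x. ennreal (F x) \<partial>M)
      + ennreal ((1 - \<alpha>) / b) * (\<integral>\<^sup>+ x. ennreal (G x) \<partial>M))"
    using assms(1,2) by (simp add: nn_integral_cmult nn_integral_add)
  also have "\<dots> \<le> ennreal K * (ennreal (\<alpha> / a) * ennreal a + ennreal ((1 - \<alpha>) / b) * ennreal b)"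
    using IF IG by (intro mult_left_mono add_mono) auto
  also have "\<dots> = ennreal K"
    using \<open>0 < a\<close> \<open>0 < b\<close> \<open>0 \<le> K\<close> assms(9,10)
    by (simp add: ennreal_mult[symmetric] ennreal_plus[symmetric] del: ennreal_plus)
  finally show ?thesis by (simp add: K_def)
qed

lemma nn_integral_weighted_bounded_le:
  fixes g :: "'a::euclidean_space \<Rightarrow> real"
  assumes "S \<in> sets lebesgue" "AE x in lebesgue. \<bar>g x\<bar> \<le> c" "0 \<le> c" "0 < p"
    and "(\<integral>\<^sup>+ x. indicator S x * ennreal (norm x powr (\<gamma> * p)) \<partial>lebesgue) \<le> ennreal I"
  shows "(\<integral>\<^sup>+ x. indicator S x * ennreal (\<bar>norm x powr \<gamma> * g x\<bar> powr p) \<partial>lebesgue)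
    \<le> ennreal (c powr p * I)"
proof -
  have "AE x in lebesgue. indicator S x * ennreal (\<bar>norm x powr \<gamma> * g x\<bar> powr p)
      \<le> ennreal (c powr p) * (indicator S x * ennreal (norm x powr (\<gamma> * p)))"
    using assms(2)
  proof eventually_elim
    case (elim x)
    have "\<bar>norm x powr \<gamma> * g x\<bar> powr p = norm x powr (\<gamma> * p) * \<bar>g x\<bar> powr p"
      by (simp add: abs_mult powr_mult powr_powr)
    also have "\<dots> \<le> c powr p * norm x powr (\<gamma> * p)"
      using elim assms(4) by (simp add: mult.commute) (intro mult_right_mono powr_mono2, auto)
    finally show ?case
      by (cases "x \<in> S") (simp_all add: ennreal_mult[symmetric] ennreal_leI)
  qed
  then have "(\<integral>\<^sup>+ x. indicator S x * ennreal (\<bar>norm x powr \<gamma> * g x\<bar> powr p) \<partial>lebesgue)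
      \<le> ennreal (c powr p) * (\<integral>\<^sup>+ x. indicator S x * ennreal (norm x powr (\<gamma> * p)) \<partial>lebesgue)"
    using assms(1) by (subst nn_integral_cmult[symmetric]) (auto intro: nn_integral_mono_AE)
  also have "\<dots> \<le> ennreal (c powr p) * ennreal I"
    using assms(5) by (rule mult_left_mono) simp
  finally show ?thesis by (simp add: ennreal_mult')
qed

text \<open>Hoelder with exponents \<open>2/p\<close> and \<open>1/(1 - p/2)\<close> against the weight \<open>norm x powr q\<close>; the
  exponent \<open>q\<close> is chosen so that the weights recombine to \<open>norm x powr (\<gamma> p)\<close>.\<close>
lemma nn_integral_weighted_L2_le:
  fixes g :: "'a::euclidean_space \<Rightarrow> real"
  assumes "g \<in> borel_measurable lebesgue" "S \<in> sets lebesgue" "0 \<notin> S" "0 < p" "p < 2"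
    and "(\<integral>\<^sup>+ x. ennreal (\<bar>norm x powr a * g x\<bar> powr 2) \<partial>lebesgue) \<le> ennreal c" "0 \<le> c"
    and "(\<integral>\<^sup>+ x. indicator S x * ennreal (norm x powr ((\<gamma> - a) * p / (1 - p / 2))) \<partial>lebesgue)
      \<le> ennreal I" "0 \<le> I"
  shows "(\<integral>\<^sup>+ x. indicator S x * ennreal (\<bar>norm x powr \<gamma> * g x\<bar> powr p) \<partial>lebesgue)
    \<le> ennreal (c powr (p / 2) * I powr (1 - p / 2))"
proof -
  define q where "q = (\<gamma> - a) * p / (1 - p / 2)"
  define \<alpha> where "\<alpha> = p / 2"
  have "0 < \<alpha>" "\<alpha> < 1" using assms(4,5) by (auto simp: \<alpha>_def)
  define F where "F x = indicator S x * \<bar>norm x powr a * g x\<bar> powr 2" for x :: 'a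
  define G where "G x = indicator S x * norm x powr q" for x :: 'a
  have "F \<in> borel_measurable lebesgue" "G \<in> borel_measurable lebesgue"
    unfolding F_def G_def using assms(1,2) by measurable
  have "indicator S x * ennreal (\<bar>norm x powr \<gamma> * g x\<bar> powr p) = ennreal (F x powr \<alpha> * G x powr (1 - \<alpha>))"
    for x
  proof (cases "x \<in> S")
    case True
    with assms(3) have "0 < norm x" by auto
    have "2 * \<alpha> = p" "q * (1 - \<alpha>) = (\<gamma> - a) * p"
      using assms(5) by (simp_all add: q_def \<alpha>_def field_simps)
    then have "F x powr \<alpha> * G x powr (1 - \<alpha>)
        = (norm x powr a * \<bar>g x\<bar>) powr p * norm x powr ((\<gamma> - a) * p)"
      using True by (simp add: F_def G_def abs_mult powr_powr del: powr_numeral)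
    also have "\<dots> = (norm x powr (a * p) * norm x powr ((\<gamma> - a) * p)) * \<bar>g x\<bar> powr p"
      by (simp add: powr_mult powr_powr mult_ac)
    also have "norm x powr (a * p) * norm x powr ((\<gamma> - a) * p) = norm x powr (\<gamma> * p)"
      by (simp add: powr_add[symmetric] algebra_simps)
    also have "norm x powr (\<gamma> * p) * \<bar>g x\<bar> powr p = \<bar>norm x powr \<gamma> * g x\<bar> powr p"
      by (simp add: abs_mult powr_mult powr_powr)
    finally show ?thesis using True by simp
  qed (use \<open>0 < \<alpha>\<close> \<open>\<alpha> < 1\<close> in \<open>simp add: F_def G_def\<close>)
  moreover have "(\<integral>\<^sup>+ x. ennreal (F x) \<partial>lebesgue) \<le> ennreal c"
  proof -
    have "(\<integral>\<^sup>+ x. ennreal (F x) \<partial>lebesgue) \<le> (\<integral>\<^sup>+ x. ennreal (\<bar>norm x powr a * g x\<bar> powr 2) \<partial>lebesgue)"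
      by (intro nn_integral_mono) (simp add: F_def indicator_def)
    then show ?thesis using assms(6) by simp
  qed
  moreover have "(\<integral>\<^sup>+ x. ennreal (G x) \<partial>lebesgue) \<le> ennreal I"
  proof -
    have "(\<integral>\<^sup>+ x. ennreal (G x) \<partial>lebesgue) = (\<integral>\<^sup>+ x. indicator S x * ennreal (norm x powr q) \<partial>lebesgue)"
      by (intro nn_integral_cong) (simp add: G_def indicator_def)
    then show ?thesis using assms(8) by (simp add: q_def)
  qed
  ultimately show ?thesis
    using nn_integral_Holder_le[of F lebesgue G c I \<alpha>] \<open>F \<in> borel_measurable lebesgue\<close>
      \<open>G \<in> borel_measurable lebesgue\<close> \<open>0 < \<alpha>\<close> \<open>\<alpha> < 1\<close> assms(7,9)
    by (simp add: \<alpha>_def F_def G_def)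
qed

lemma nn_integral_weighted_split_le:
  fixes g g0 g1 :: "'a::euclidean_space \<Rightarrow> real"
  assumes "g0 \<in> borel_measurable lebesgue" "g1 \<in> borel_measurable lebesgue" "S \<in> sets lebesgue" "0 \<notin> S"
    and "\<And>x. \<bar>g x\<bar> \<le> \<bar>g0 x\<bar> + \<bar>g1 x\<bar>" "1 < p" "p < 2"
    and "AE x in lebesgue. \<bar>g0 x\<bar> \<le> c0" "0 \<le> c0"
    and "(\<integral>\<^sup>+ x. indicator S x * ennreal (norm x powr (\<gamma> * p)) \<partial>lebesgue) \<le> ennreal I0" "0 \<le> I0"
    and "(\<integral>\<^sup>+ x. ennreal (\<bar>norm x powr a * g1 x\<bar> powr 2) \<partial>lebesgue) \<le> ennreal c2" "0 \<le> c2"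
    and "(\<integral>\<^sup>+ x. indicator S x * ennreal (norm x powr ((\<gamma> - a) * p / (1 - p / 2))) \<partial>lebesgue)
      \<le> ennreal I1" "0 \<le> I1"
  shows "(\<integral>\<^sup>+ x. indicator S x * ennreal (\<bar>norm x powr \<gamma> * g x\<bar> powr p) \<partial>lebesgue)
    \<le> ennreal (2 powr (p - 1) * (c0 powr p * I0 + c2 powr (p / 2) * I1 powr (1 - p / 2)))"
proof -
  define h where "h g' x = indicator S x * ennreal (\<bar>norm x powr \<gamma> * g' x\<bar> powr p)"
    for g' :: "'a \<Rightarrow> real" and x
  have "h g0 \<in> borel_measurable lebesgue" "h g1 \<in> borel_measurable lebesgue"
    unfolding h_def using assms(1-3) by measurable
  have pointwise: "h g x \<le> ennreal (2 powr (p - 1)) * (h g0 x + h g1 x)" for x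
  proof -
    have "\<bar>norm x powr \<gamma> * g x\<bar> \<le> \<bar>norm x powr \<gamma> * g0 x\<bar> + \<bar>norm x powr \<gamma> * g1 x\<bar>"
      using assms(5)[of x] by (simp add: abs_mult distrib_left[symmetric] mult_left_mono)
    then have "\<bar>norm x powr \<gamma> * g x\<bar> powr p
        \<le> 2 powr (p - 1) * (\<bar>norm x powr \<gamma> * g0 x\<bar> powr p + \<bar>norm x powr \<gamma> * g1 x\<bar> powr p)"
      using assms(6) by (intro order_trans[OF powr_mono2 powr_add_le_two_powr]) auto
    then show ?thesis
      by (cases "x \<in> S") (simp_all add: h_def ennreal_mult[symmetric] ennreal_plus[symmetric] ennreal_leI del: ennreal_plus)
  qed
  have "(\<integral>\<^sup>+ x. h g x \<partial>lebesgue) \<le> (\<integral>\<^sup>+ x. ennreal (2 powr (p - 1)) * (h g0 x + h g1 x) \<partial>lebesgue)"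
    by (intro nn_integral_mono pointwise)
  also have "\<dots> = ennreal (2 powr (p - 1)) * ((\<integral>\<^sup>+ x. h g0 x \<partial>lebesgue) + (\<integral>\<^sup>+ x. h g1 x \<partial>lebesgue))"
    using \<open>h g0 \<in> borel_measurable lebesgue\<close> \<open>h g1 \<in> borel_measurable lebesgue\<close>
    by (simp add: nn_integral_cmult nn_integral_add)
  also have "\<dots> \<le> ennreal (2 powr (p - 1)) * (ennreal (c0 powr p * I0) + ennreal (c2 powr (p / 2) * I1 powr (1 - p / 2)))"
    unfolding h_def using assms
    by (intro mult_left_mono add_mono nn_integral_weighted_bounded_le nn_integral_weighted_L2_le) auto
  finally show ?thesis
    using assms(9,11,13,15) by (simp add: h_def ennreal_mult[symmetric] ennreal_plus[symmetric] del: ennreal_plus)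
qed

lemma interpolation_exponents:
  fixes a \<theta> n :: real
  assumes "0 < \<theta>" "\<theta> < 1"
  defines "p \<equiv> 2 / (2 - \<theta>)" and "\<gamma> \<equiv> a * \<theta> - (1 - \<theta>) * n"
  shows "\<gamma> * p + n = p * \<theta> * (a + n / 2)"
    and "((\<gamma> - a) * p / (1 - p / 2) + n) * (1 - p / 2) = - ((2 - p) * (a + n / 2))"
proof -
  have "2 - \<theta> \<noteq> 0" "p * (2 - \<theta>) = 2" "1 - p / 2 \<noteq> 0"
    using assms(1,2) by (auto simp: p_def field_simps)
  show "\<gamma> * p + n = p * \<theta> * (a + n / 2)"
    using \<open>p * (2 - \<theta>) = 2\<close> by (simp add: \<gamma>_def algebra_simps) (simp add: field_simps)
  have "((\<gamma> - a) * p / (1 - p / 2) + n) * (1 - p / 2) = (\<gamma> - a) * p + n * (1 - p / 2)"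
    using \<open>1 - p / 2 \<noteq> 0\<close> by (simp add: field_simps)
  also have "\<dots> = - ((2 - p) * (a + n / 2)) - (a + n) * (p * (2 - \<theta>) - 2)"
    by (simp add: \<gamma>_def algebra_simps) (simp add: field_simps)
  finally show "((\<gamma> - a) * p / (1 - p / 2) + n) * (1 - p / 2) = - ((2 - p) * (a + n / 2))"
    using \<open>p * (2 - \<theta>) = 2\<close> by simp
qed

text \<open>With \<open>\<sigma> = B / (A 2\<^sup>t)\<close>, the two endpoint contributions on the annulus at scale \<open>2\<^sup>k\<close>
  (\<open>t = k (a + n/2)\<close>) share the factor \<open>A\<^bsup>p(1-\<theta>)\<^esup> B\<^bsup>p\<theta>\<^esup>\<close>.\<close>
lemma endpoint_rescaling:
  fixes A B S1 S2 t \<theta> :: real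
  assumes "0 < A" "0 < B" "0 \<le> S1" "0 \<le> S2" "0 < \<theta>" "\<theta> < 1"
  defines "p \<equiv> 2 / (2 - \<theta>)" and "\<sigma> \<equiv> B / A * 2 powr (-t)"
  shows "(A * S1) powr p * 2 powr (t * (p * \<theta>))
      = A powr (p * (1 - \<theta>)) * B powr (p * \<theta>) * (\<sigma> powr (-\<theta>) * S1) powr p"
    and "(B\<^sup>2 * S2) powr (p / 2) * 2 powr (- ((2 - p) * t))
      = A powr (p * (1 - \<theta>)) * B powr (p * \<theta>) * (\<sigma> powr (2 - p) * S2 powr (p / 2))"
proof -
  have "2 - p = p * (1 - \<theta>)" using assms(5,6) by (simp add: p_def field_simps)
  have "\<sigma> powr e = B powr e * A powr (-e) * 2 powr (-t * e)" for e
    using assms(1,2) by (simp add: \<sigma>_def powr_mult powr_divide powr_minus_divide powr_powr)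
  then have \<sigma>1: "(\<sigma> powr (-\<theta>) * S1) powr p = B powr (-\<theta> * p) * A powr (\<theta> * p) * 2 powr (t * \<theta> * p) * S1 powr p"
    and \<sigma>2: "\<sigma> powr (2 - p) = B powr (2 - p) * A powr (-(2 - p)) * 2 powr (-((2 - p) * t))"
    using assms(3) by (simp_all add: powr_mult powr_powr mult_ac)
  have "A powr (p * (1 - \<theta>)) * B powr (p * \<theta>) * (\<sigma> powr (-\<theta>) * S1) powr p
      = (A powr (p * (1 - \<theta>)) * A powr (\<theta> * p)) * (B powr (p * \<theta>) * B powr (-\<theta> * p))
        * 2 powr (t * \<theta> * p) * S1 powr p"
    unfolding \<sigma>1 by (simp add: mult_ac)
  also have "\<dots> = (A * S1) powr p * 2 powr (t * (p * \<theta>))"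
    using assms(1,2) by (simp add: powr_add[symmetric] powr_mult algebra_simps)
  finally show "(A * S1) powr p * 2 powr (t * (p * \<theta>))
      = A powr (p * (1 - \<theta>)) * B powr (p * \<theta>) * (\<sigma> powr (-\<theta>) * S1) powr p" ..
  have "A powr (p * (1 - \<theta>)) * B powr (p * \<theta>) * (\<sigma> powr (2 - p) * S2 powr (p / 2))
      = (A powr (p * (1 - \<theta>)) * A powr (-(2 - p))) * (B powr (p * \<theta>) * B powr (2 - p))
        * 2 powr (-((2 - p) * t)) * S2 powr (p / 2)"
    unfolding \<sigma>2 by (simp add: mult_ac)
  also have "\<dots> = B powr p * 2 powr (-((2 - p) * t)) * S2 powr (p / 2)"
    using assms(1,2) \<open>2 - p = p * (1 - \<theta>)\<close> by (simp add: powr_add[symmetric] algebra_simps)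
  also have "\<dots> = (B\<^sup>2 * S2) powr (p / 2) * 2 powr (- ((2 - p) * t))"
    using assms(2,4) by (simp add: powr_mult powr_powr flip: powr_numeral)
  finally show "(B\<^sup>2 * S2) powr (p / 2) * 2 powr (- ((2 - p) * t))
      = A powr (p * (1 - \<theta>)) * B powr (p * \<theta>) * (\<sigma> powr (2 - p) * S2 powr (p / 2))" ..
qed

lemma nn_integral_le_of_sum_annuli_le:
  fixes h :: "'a::euclidean_space \<Rightarrow> ennreal"
  assumes "h \<in> borel_measurable lebesgue" "h 0 = 0"
    and "\<And>N. (\<Sum>k\<in>{- int N..<int N}. \<integral>\<^sup>+ x. indicator (annulus k) x * h x \<partial>lebesgue) \<le> W"
  shows "(\<integral>\<^sup>+ x. h x \<partial>lebesgue) \<le> W"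
proof -
  define \<Omega> where "\<Omega> N = (\<Union>k\<in>{- int N..<int N}. annulus k :: 'a set)" for N :: nat
  have disj: "disjoint_family_on (annulus :: int \<Rightarrow> 'a set) K" for K
    by (auto simp: disjoint_family_on_def dest: annulus_disjoint)
  have "\<Omega> N \<in> sets lebesgue" for N
    unfolding \<Omega>_def by (intro sets.finite_UN) auto
  have "incseq (\<lambda>N x. indicator (\<Omega> N) x * h x)"
  proof (intro monoI le_funI mult_right_mono)
    fix N N' :: nat and x :: 'a assume "N \<le> N'"
    then have "\<Omega> N \<subseteq> \<Omega> N'" unfolding \<Omega>_def by (intro UN_mono) auto
    then show "indicator (\<Omega> N) x \<le> (indicator (\<Omega> N') x :: ennreal)" by (auto simp: indicator_def)
  qed simp
  \<comment> \<open>the annuli exhaust the punctured space, and \<open>h\<close> vanishes at the origin\<close>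
  moreover have "(SUP N. indicator (\<Omega> N) x * h x) = h x" for x
  proof (cases "x = 0")
    case False
    define k where "k = \<lfloor>log 2 (norm x)\<rfloor>"
    have "k \<in> {- int (nat \<bar>k\<bar> + 1)..<int (nat \<bar>k\<bar> + 1)}" by auto
    then have "x \<in> \<Omega> (nat \<bar>k\<bar> + 1)"
      using mem_annulus_floor_log[OF False] unfolding \<Omega>_def k_def by blast
    then have "h x \<le> (SUP N. indicator (\<Omega> N) x * h x)"
      by (intro SUP_upper2[of "nat \<bar>k\<bar> + 1"]) auto
    moreover have "(SUP N. indicator (\<Omega> N) x * h x) \<le> h x"
      by (intro SUP_least) (auto simp: indicator_def)
    ultimately show ?thesis by (rule antisym[rotated])
  qed (simp add: assms(2))
  ultimately have "(\<integral>\<^sup>+ x. h x \<partial>lebesgue) = (SUP N. \<integral>\<^sup>+ x. indicator (\<Omega> N) x * h x \<partial>lebesgue)"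
    using assms(1) \<open>\<And>N. \<Omega> N \<in> sets lebesgue\<close>
    by (simp add: nn_integral_monotone_convergence_SUP[symmetric])
  also have "\<dots> \<le> W"
  proof (intro SUP_least)
    fix N
    have "(\<integral>\<^sup>+ x. indicator (\<Omega> N) x * h x \<partial>lebesgue)
        = (\<integral>\<^sup>+ x. (\<Sum>k\<in>{- int N..<int N}. indicator (annulus k) x * h x) \<partial>lebesgue)"
      by (intro nn_integral_cong) (simp add: \<Omega>_def indicator_UN_disjoint[OF _ disj] sum_distrib_right)
    also have "\<dots> = (\<Sum>k\<in>{- int N..<int N}. \<integral>\<^sup>+ x. indicator (annulus k) x * h x \<partial>lebesgue)"
      using assms(1) by (intro nn_integral_sum) auto
    finally show "(\<integral>\<^sup>+ x. indicator (\<Omega> N) x * h x \<partial>lebesgue) \<le> W" using assms(3) by simp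
  qed
  finally show ?thesis .
qed

lemma sum_symmetric_interval_geometric:
  fixes g :: "real \<Rightarrow> 'b::comm_monoid_add" and c s :: real
  shows "(\<Sum>k\<in>{- int N..<int N}. g (s * 2 powr (- (real_of_int k * c))))
    = (\<Sum>j<2 * N. g (s * 2 powr (real N * c) * (2 powr (-c)) ^ j))"
proof (rule sum.reindex_bij_witness[where i="\<lambda>j. int j - int N" and j="\<lambda>k. nat (k + int N)"])
  fix k assume "k \<in> {- int N..<int N}"
  then have "real (nat (k + int N)) = real_of_int k + real N" by simp
  then have "(2 powr (-c)) ^ nat (k + int N) = 2 powr (- ((real_of_int k + real N) * c))"
    by (simp add: powr_power)
  then have "s * 2 powr (real N * c) * (2 powr (-c)) ^ nat (k + int N) = s * 2 powr (- (real_of_int k * c))"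
    by (simp add: mult.assoc powr_add[symmetric] algebra_simps)
  then show "g (s * 2 powr (real N * c) * (2 powr (-c)) ^ nat (k + int N)) = g (s * 2 powr (- (real_of_int k * c)))"
    by (simp only:)
qed auto

definition split_const :: "real \<Rightarrow> nat \<Rightarrow> real \<Rightarrow> real" where
  "split_const a n \<theta> =
     (let p = 2 / (2 - \<theta>); \<gamma> = a * \<theta> - (1 - \<theta>) * real n
      in 2 powr (p - 1) * max (annulus_const n (\<gamma> * p))
           (annulus_const n ((\<gamma> - a) * p / (1 - p / 2)) powr (1 - p / 2)))"

lemma split_const_nonneg: "0 \<le> split_const a n \<theta>"
  using annulus_const_pos[of n] by (simp add: split_const_def Let_def le_max_iff_disj less_imp_le)

lemma annulus_split_bound_le:
  fixes A B S1 S2 \<theta> a :: real and k :: int and n :: nat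
  assumes "0 < A" "0 < B" "0 \<le> S1" "0 \<le> S2" "0 < \<theta>" "\<theta> < 1"
  defines "p \<equiv> 2 / (2 - \<theta>)" and "\<gamma> \<equiv> a * \<theta> - (1 - \<theta>) * real n"
    and "\<sigma> \<equiv> B / A * 2 powr (- (real_of_int k * (a + real n / 2)))"
  shows "2 powr (p - 1) * ((A * S1) powr p * (annulus_const n (\<gamma> * p) * 2 powr (real_of_int k * (\<gamma> * p + real n)))
      + (B\<^sup>2 * S2) powr (p / 2) * (annulus_const n ((\<gamma> - a) * p / (1 - p / 2))
          * 2 powr (real_of_int k * ((\<gamma> - a) * p / (1 - p / 2) + real n))) powr (1 - p / 2))
    \<le> split_const a n \<theta> * (A powr (p * (1 - \<theta>)) * B powr (p * \<theta>))
      * ((\<sigma> powr (-\<theta>) * S1) powr p + \<sigma> powr (2 - p) * S2 powr (p / 2))"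
proof -
  define t where "t = real_of_int k * (a + real n / 2)"
  define q where "q = (\<gamma> - a) * p / (1 - p / 2)"
  define K0 where "K0 = annulus_const n (\<gamma> * p)"
  define K1 where "K1 = annulus_const n q powr (1 - p / 2)"
  define AB where "AB = A powr (p * (1 - \<theta>)) * B powr (p * \<theta>)"
  have "0 \<le> AB" "0 \<le> K0" "0 \<le> K1" using annulus_const_pos by (simp_all add: AB_def K0_def K1_def less_imp_le)
  have split_eq: "split_const a n \<theta> = 2 powr (p - 1) * max K0 K1"
    by (simp add: split_const_def Let_def K0_def K1_def q_def \<gamma>_def p_def)
  have "real_of_int k * (\<gamma> * p + real n) = t * (p * \<theta>)"
    using interpolation_exponents(1)[OF assms(5,6), of a "real n"] by (simp add: t_def \<gamma>_def p_def mult_ac)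
  moreover have "(annulus_const n q * 2 powr (real_of_int k * (q + real n))) powr (1 - p / 2)
      = K1 * 2 powr (- ((2 - p) * t))"
    using interpolation_exponents(2)[OF assms(5,6), of a "real n"] annulus_const_pos[of n q]
    by (simp add: K1_def powr_mult powr_powr t_def q_def \<gamma>_def p_def mult_ac)
  ultimately have "2 powr (p - 1) * ((A * S1) powr p * (K0 * 2 powr (real_of_int k * (\<gamma> * p + real n)))
      + (B\<^sup>2 * S2) powr (p / 2) * (annulus_const n q * 2 powr (real_of_int k * (q + real n))) powr (1 - p / 2))
    = 2 powr (p - 1) * (K0 * (AB * (\<sigma> powr (-\<theta>) * S1) powr p) + K1 * (AB * (\<sigma> powr (2 - p) * S2 powr (p / 2))))"
    using endpoint_rescaling[OF assms(1-6), of t] unfolding AB_def \<sigma>_def t_def p_def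
    by (simp add: mult_ac)
  also have "\<dots> \<le> 2 powr (p - 1) * (max K0 K1 * (AB * (\<sigma> powr (-\<theta>) * S1) powr p)
      + max K0 K1 * (AB * (\<sigma> powr (2 - p) * S2 powr (p / 2))))"
    using \<open>0 \<le> AB\<close> by (intro mult_left_mono add_mono mult_right_mono) auto
  also have "\<dots> = split_const a n \<theta> * AB * ((\<sigma> powr (-\<theta>) * S1) powr p + \<sigma> powr (2 - p) * S2 powr (p / 2))"
    using split_eq by (simp add: distrib_left mult_ac)
  finally show ?thesis by (simp add: K0_def q_def AB_def)
qed

definition interpolation_const :: "real \<Rightarrow> nat \<Rightarrow> real \<Rightarrow> real" where
  "interpolation_const a n \<theta> =
     (split_const a n \<theta> * truncation_const (2 powr (- (a + real n / 2))) \<theta>) powr ((2 - \<theta>) / 2)"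

locale sublinear_endpoint_bounds =
  fixes M :: "'b measure" and T :: "('b \<Rightarrow> real) \<Rightarrow> 'a::euclidean_space \<Rightarrow> real" and A B a :: real
  assumes A_pos: "0 < A" and B_pos: "0 < B"
    and sublinear: "sublinear_on (simple_fun M) T"
    and T_measurable: "\<And>f. simple_fun M f \<Longrightarrow> T f \<in> borel_measurable lebesgue"
    and L1_Linf_bound: "\<And>f. simple_fun M f \<Longrightarrow> Linf_norm lebesgue (T f) \<le> ennreal A * Lp_norm M 1 f"
    and weighted_L2_bound: "\<And>f. simple_fun M f \<Longrightarrow>
      Lp_norm lebesgue 2 (\<lambda>x. norm x powr a * T f x) \<le> ennreal B * Lp_norm M 2 f"
begin

lemma truncation_estimates:
  fixes f :: "'b \<Rightarrow> real" and l :: real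
  assumes "simple_fun M f"
  defines "f0 \<equiv> \<lambda>y. if l < \<bar>f y\<bar> then f y else 0" and "f1 \<equiv> \<lambda>y. if l < \<bar>f y\<bar> then 0 else f y"
    and "R \<equiv> nonzero_values M f" and "\<mu> \<equiv> value_measure M f"
  shows "simple_fun M f0" "simple_fun M f1" "\<bar>T f x\<bar> \<le> \<bar>T f0 x\<bar> + \<bar>T f1 x\<bar>"
    and "AE x in lebesgue. \<bar>T f0 x\<bar> \<le> A * tail_L1 R \<mu> l"
    and "(\<integral>\<^sup>+ x. ennreal (\<bar>norm x powr a * T f1 x\<bar> powr 2) \<partial>lebesgue) \<le> ennreal (B\<^sup>2 * head_L2sq R \<mu> l)"
proof -
  show "simple_fun M f0" "simple_fun M f1"
    unfolding f0_def f1_def by (auto intro: simple_fun_compose[OF assms(1)])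
  moreover have "(\<lambda>y. f0 y + f1 y) = f" by (auto simp: f0_def f1_def)
  ultimately show "\<bar>T f x\<bar> \<le> \<bar>T f0 x\<bar> + \<bar>T f1 x\<bar>"
    using sublinear unfolding sublinear_on_def by metis
  have "0 \<le> tail_L1 R \<mu> l" "0 \<le> head_L2sq R \<mu> l"
    by (auto simp: tail_L1_def head_L2sq_def \<mu>_def intro!: sum_nonneg)
  show "AE x in lebesgue. \<bar>T f0 x\<bar> \<le> A * tail_L1 R \<mu> l"
    using L1_Linf_bound[OF \<open>simple_fun M f0\<close>] A_pos \<open>0 \<le> tail_L1 R \<mu> l\<close>
    unfolding f0_def Lp_norm_upper_truncation[OF assms(1)] R_def \<mu>_def
    by (intro AE_abs_le_of_Linf_norm_le) (auto simp: ennreal_mult')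
  have "Lp_norm lebesgue 2 (\<lambda>x. norm x powr a * T f1 x) \<le> ennreal (B * head_L2sq R \<mu> l powr (1 / 2))"
    using weighted_L2_bound[OF \<open>simple_fun M f1\<close>] B_pos
    unfolding f1_def Lp_norm_lower_truncation[OF assms(1)] R_def \<mu>_def by (simp add: ennreal_mult')
  then have "(\<integral>\<^sup>+ x. ennreal (\<bar>norm x powr a * T f1 x\<bar> powr 2) \<partial>lebesgue)
      \<le> ennreal ((B * head_L2sq R \<mu> l powr (1 / 2)) powr 2)"
    using B_pos by (intro nn_integral_powr_le_of_Lp_norm_le) auto
  also have "(B * head_L2sq R \<mu> l powr (1 / 2)) powr 2 = B\<^sup>2 * head_L2sq R \<mu> l"
    using B_pos \<open>0 \<le> head_L2sq R \<mu> l\<close> by (simp add: powr_mult powr_powr flip: powr_numeral)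
  finally show "(\<integral>\<^sup>+ x. ennreal (\<bar>norm x powr a * T f1 x\<bar> powr 2) \<partial>lebesgue) \<le> ennreal (B\<^sup>2 * head_L2sq R \<mu> l)" .
qed


lemma nn_integral_annulus_le:
  fixes f :: "'b \<Rightarrow> real"
  assumes "simple_fun M f" "0 < \<theta>" "\<theta> < 1"
  defines "p \<equiv> 2 / (2 - \<theta>)" and "\<gamma> \<equiv> a * \<theta> - (1 - \<theta>) * real DIM('a)"
  shows "(\<integral>\<^sup>+ x. indicator (annulus k) x * ennreal (\<bar>norm x powr \<gamma> * T f x\<bar> powr p) \<partial>lebesgue)
    \<le> ennreal (split_const a DIM('a) \<theta> * (A powr (p * (1 - \<theta>)) * B powr (p * \<theta>))
        * truncation_cost (nonzero_values M f) (value_measure M f) \<theta>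
            (B / A * 2 powr (- (real_of_int k * (a + real DIM('a) / 2)))))"
proof -
  define R where "R = nonzero_values M f"
  define \<mu> where "\<mu> = value_measure M f"
  define \<sigma> where "\<sigma> = B / A * 2 powr (- (real_of_int k * (a + real DIM('a) / 2)))"
  define l where "l = truncation_level R \<mu> \<sigma>"
  define f0 where "f0 = (\<lambda>y. if l < \<bar>f y\<bar> then f y else 0)"
  define f1 where "f1 = (\<lambda>y. if l < \<bar>f y\<bar> then 0 else f y)"
  note trunc = truncation_estimates[OF assms(1), where l=l, folded f0_def f1_def R_def \<mu>_def]
  have "1 < p" "p < 2" using assms(2,3) by (auto simp: p_def field_simps)
  have "0 \<le> tail_L1 R \<mu> l" "0 \<le> head_L2sq R \<mu> l"
    by (auto simp: tail_L1_def head_L2sq_def \<mu>_def intro!: sum_nonneg)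
  \<comment> \<open>split \<open>f\<close> at the level \<open>l\<close> and use the \<open>L\<^sup>\<infinity>\<close> bound for the large values,
    the weighted \<open>L\<^sup>2\<close> bound for the small ones\<close>
  have "(\<integral>\<^sup>+ x. indicator (annulus k) x * ennreal (\<bar>norm x powr \<gamma> * T f x\<bar> powr p) \<partial>lebesgue)
    \<le> ennreal (2 powr (p - 1) * ((A * tail_L1 R \<mu> l) powr p
          * (annulus_const DIM('a) (\<gamma> * p) * 2 powr (real_of_int k * (\<gamma> * p + real DIM('a))))
        + (B\<^sup>2 * head_L2sq R \<mu> l) powr (p / 2) * (annulus_const DIM('a) ((\<gamma> - a) * p / (1 - p / 2))
          * 2 powr (real_of_int k * ((\<gamma> - a) * p / (1 - p / 2) + real DIM('a)))) powr (1 - p / 2)))"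
    using trunc T_measurable \<open>1 < p\<close> \<open>p < 2\<close> A_pos \<open>0 \<le> tail_L1 R \<mu> l\<close> \<open>0 \<le> head_L2sq R \<mu> l\<close>
    by (intro nn_integral_weighted_split_le)
      (auto intro!: nn_integral_annulus_norm_powr_le mult_nonneg_nonneg less_imp_le[OF annulus_const_pos]
        dest: norm_pos_of_mem_annulus)
  also have "\<dots> \<le> ennreal (split_const a DIM('a) \<theta> * (A powr (p * (1 - \<theta>)) * B powr (p * \<theta>))
      * ((\<sigma> powr (-\<theta>) * tail_L1 R \<mu> l) powr p + \<sigma> powr (2 - p) * head_L2sq R \<mu> l powr (p / 2)))"
    unfolding p_def \<gamma>_def \<sigma>_def
    using A_pos B_pos \<open>0 \<le> tail_L1 R \<mu> l\<close> \<open>0 \<le> head_L2sq R \<mu> l\<close> assms(2,3)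
    by (intro ennreal_leI annulus_split_bound_le)
  finally show ?thesis
    by (simp add: truncation_cost_def Let_def p_def l_def R_def \<mu>_def \<sigma>_def)
qed


lemma nn_integral_weighted_powr_le:
  fixes f :: "'b \<Rightarrow> real"
  assumes "a \<noteq> - real DIM('a) / 2" "simple_fun M f" "0 < \<theta>" "\<theta> < 1"
  defines "p \<equiv> 2 / (2 - \<theta>)" and "\<rho> \<equiv> 2 powr (- (a + real DIM('a) / 2))"
  shows "(\<integral>\<^sup>+ x. ennreal (\<bar>norm x powr (a * \<theta> - (1 - \<theta>) * real DIM('a)) * T f x\<bar> powr p) \<partial>lebesgue)
    \<le> ennreal (split_const a DIM('a) \<theta> * (A powr (p * (1 - \<theta>)) * B powr (p * \<theta>))
        * (truncation_const \<rho> \<theta> * moment (nonzero_values M f) (value_measure M f) p))"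
    (is "_ \<le> ennreal (?K * ?AB * _)")
proof (rule nn_integral_le_of_sum_annuli_le)
  define n where "n = real DIM('a)"
  define R where "R = nonzero_values M f"
  define \<mu> where "\<mu> = value_measure M f"
  have "1 < p" using assms(3,4) by (simp add: p_def field_simps)
  show "(\<lambda>x. ennreal (\<bar>norm x powr (a * \<theta> - (1 - \<theta>) * real DIM('a)) * T f x\<bar> powr p)) \<in> borel_measurable lebesgue"
    using T_measurable[OF assms(2)] by measurable
  show "ennreal (\<bar>norm 0 powr (a * \<theta> - (1 - \<theta>) * real DIM('a)) * T f 0\<bar> powr p) = 0"
    using \<open>1 < p\<close> by simp
  fix N
  have "(\<Sum>k\<in>{- int N..<int N}. \<integral>\<^sup>+ x. indicator (annulus k) x
        * ennreal (\<bar>norm x powr (a * \<theta> - (1 - \<theta>) * real DIM('a)) * T f x\<bar> powr p) \<partial>lebesgue)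
      \<le> (\<Sum>k\<in>{- int N..<int N}. ennreal (?K * ?AB
          * truncation_cost R \<mu> \<theta> (B / A * 2 powr (- (real_of_int k * (a + n / 2))))))"
    unfolding R_def \<mu>_def n_def p_def using nn_integral_annulus_le[OF assms(2-4)] by (intro sum_mono) simp
  also have "\<dots> = ennreal (?K * ?AB
      * (\<Sum>k\<in>{- int N..<int N}. truncation_cost R \<mu> \<theta> (B / A * 2 powr (- (real_of_int k * (a + n / 2))))))"
    using split_const_nonneg truncation_cost_nonneg by (subst sum_ennreal) (auto simp: sum_distrib_left)
  \<comment> \<open>the scales of the annuli form a geometric sequence, with ratio \<open>\<rho> \<noteq> 1\<close> since \<open>a \<noteq> -n/2\<close>\<close>
  also have "\<dots> = ennreal (?K * ?AB
      * (\<Sum>j<2 * N. truncation_cost R \<mu> \<theta> (B / A * 2 powr (real N * (a + n / 2)) * \<rho> ^ j)))"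
    unfolding \<rho>_def n_def sum_symmetric_interval_geometric ..
  also have "\<dots> \<le> ennreal (?K * ?AB * (truncation_const \<rho> \<theta> * moment R \<mu> p))"
    unfolding p_def using simple_fun_nonzero_values[OF assms(2)] A_pos B_pos assms(1,3,4) split_const_nonneg
    by (intro ennreal_leI mult_left_mono sum_truncation_cost_geometric_le)
      (auto simp: R_def \<mu>_def \<rho>_def)
  finally show "(\<Sum>k\<in>{- int N..<int N}. \<integral>\<^sup>+ x. indicator (annulus k) x
        * ennreal (\<bar>norm x powr (a * \<theta> - (1 - \<theta>) * real DIM('a)) * T f x\<bar> powr p) \<partial>lebesgue)
      \<le> ennreal (?K * ?AB * (truncation_const \<rho> \<theta> * moment (nonzero_values M f) (value_measure M f) p))"
    by (simp add: R_def \<mu>_def)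
qed

theorem weighted_Lp_bound:
  fixes f :: "'b \<Rightarrow> real"
  assumes "a \<noteq> - real DIM('a) / 2" "simple_fun M f" "0 < \<theta>" "\<theta> < 1"
  defines "p \<equiv> 2 / (2 - \<theta>)"
  shows "Lp_norm lebesgue p (\<lambda>x. norm x powr (a * \<theta> - (1 - \<theta>) * real DIM('a)) * T f x)
    \<le> ennreal (interpolation_const a DIM('a) \<theta> * A powr (1 - \<theta>) * B powr \<theta>) * Lp_norm M p f"
proof -
  define \<rho> where "\<rho> = (2::real) powr (- (a + real DIM('a) / 2))"
  define S where "S = moment (nonzero_values M f) (value_measure M f) p"
  define AB where "AB = A powr (p * (1 - \<theta>)) * B powr (p * \<theta>)"
  define W where "W = split_const a DIM('a) \<theta> * AB * (truncation_const \<rho> \<theta> * S)"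
  have "1 < p" using assms(3,4) by (simp add: p_def field_simps)
  have "0 < \<rho>" by (simp add: \<rho>_def)
  have "0 \<le> S" by (auto simp: S_def moment_def intro: sum_nonneg)
  have "0 \<le> split_const a DIM('a) \<theta> * truncation_const \<rho> \<theta>"
    using split_const_nonneg truncation_const_nonneg[OF \<open>0 < \<rho>\<close> assms(3,4)] by simp
  have W_eq: "W = (split_const a DIM('a) \<theta> * truncation_const \<rho> \<theta>) * AB * S"
    by (simp add: W_def mult_ac)
  have "0 \<le> W" unfolding W_eq using \<open>0 \<le> S\<close> \<open>0 \<le> split_const _ _ _ * _\<close> by (simp add: AB_def)
  have "(\<integral>\<^sup>+ x. ennreal (\<bar>norm x powr (a * \<theta> - (1 - \<theta>) * real DIM('a)) * T f x\<bar> powr p) \<partial>lebesgue)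
      \<le> ennreal W"
    using nn_integral_weighted_powr_le[OF assms(1-4)] by (simp add: W_def AB_def S_def \<rho>_def p_def)
  then have "Lp_norm lebesgue p (\<lambda>x. norm x powr (a * \<theta> - (1 - \<theta>) * real DIM('a)) * T f x)
      \<le> ennreal (W powr (1 / p))"
    using \<open>0 \<le> W\<close> \<open>1 < p\<close> by (intro Lp_norm_le_of_nn_integral_le) auto
  also have "W powr (1 / p) = (split_const a DIM('a) \<theta> * truncation_const \<rho> \<theta>) powr (1 / p)
      * AB powr (1 / p) * S powr (1 / p)"
    using \<open>0 \<le> S\<close> \<open>0 \<le> split_const _ _ _ * _\<close> unfolding W_eq by (simp add: AB_def powr_mult)
  also have "AB powr (1 / p) = A powr (1 - \<theta>) * B powr \<theta>"
    using \<open>1 < p\<close> by (simp add: AB_def powr_mult powr_powr)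
  also have "(split_const a DIM('a) \<theta> * truncation_const \<rho> \<theta>) powr (1 / p) = interpolation_const a DIM('a) \<theta>"
    by (simp add: interpolation_const_def \<rho>_def p_def)
  also have "ennreal (interpolation_const a DIM('a) \<theta> * (A powr (1 - \<theta>) * B powr \<theta>) * S powr (1 / p))
      = ennreal (interpolation_const a DIM('a) \<theta> * A powr (1 - \<theta>) * B powr \<theta>) * Lp_norm M p f"
    using Lp_norm_simple_fun[OF assms(2)] \<open>1 < p\<close>
    by (simp add: S_def ennreal_mult' interpolation_const_def mult_ac)
  finally show ?thesis .
qed

end


theorem lemma2p4:
  fixes a :: real
  assumes "a \<noteq> - real DIM('x::euclidean_space) / 2"
  shows "\<forall>\<theta>::real. 0 < \<theta> \<and> \<theta> < 1 \<longrightarrow>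
    (\<exists>C::real. \<forall>(nY::nat) (T :: ((nat \<Rightarrow> real) \<Rightarrow> real) \<Rightarrow> ('x \<Rightarrow> real)) (A::real) (B::real).
      nY > 0 \<and> A > 0 \<and> B > 0 \<and>
      sublinear_on (simple_fun (lebesgue_n nY)) T \<and>
      (\<forall>f. simple_fun (lebesgue_n nY) f \<longrightarrow> T f \<in> borel_measurable lebesgue) \<and>
      (\<forall>f. simple_fun (lebesgue_n nY) f \<longrightarrow>
          Linf_norm lebesgue (T f) \<le> ennreal A * Lp_norm (lebesgue_n nY) 1 f) \<and>
      (\<forall>f. simple_fun (lebesgue_n nY) f \<longrightarrow>
          Lp_norm lebesgue 2 (\<lambda>x. norm x powr a * T f x) \<le> ennreal B * Lp_norm (lebesgue_n nY) 2 f)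
      \<longrightarrow>
      (\<forall>f p. simple_fun (lebesgue_n nY) f \<and> 1 / p = \<theta> / 2 + 1 - \<theta> \<longrightarrow>
          Lp_norm lebesgue p
            (\<lambda>x. norm x powr (a * \<theta> - (1 - \<theta>) * real DIM('x)) * T f x)
          \<le> ennreal (C * A powr (1 - \<theta>) * B powr \<theta>) * Lp_norm (lebesgue_n nY) p f))"
proof -
  have "Lp_norm lebesgue p (\<lambda>x. norm x powr (a * \<theta> - (1 - \<theta>) * real DIM('x)) * T f x)
      \<le> ennreal (interpolation_const a DIM('x) \<theta> * A powr (1 - \<theta>) * B powr \<theta>) * Lp_norm (lebesgue_n nY) p f"
    if "0 < \<theta>" "\<theta> < 1" "0 < A" "0 < B" "sublinear_on (simple_fun (lebesgue_n nY)) T"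
      and "\<forall>f. simple_fun (lebesgue_n nY) f \<longrightarrow> T f \<in> borel_measurable lebesgue"
      and "\<forall>f. simple_fun (lebesgue_n nY) f \<longrightarrow>
        Linf_norm lebesgue (T f) \<le> ennreal A * Lp_norm (lebesgue_n nY) 1 f"
      and "\<forall>f. simple_fun (lebesgue_n nY) f \<longrightarrow>
        Lp_norm lebesgue 2 (\<lambda>x. norm x powr a * T f x) \<le> ennreal B * Lp_norm (lebesgue_n nY) 2 f"
      and "simple_fun (lebesgue_n nY) f" "1 / p = \<theta> / 2 + 1 - \<theta>"
    for \<theta> nY A B p and T :: "((nat \<Rightarrow> real) \<Rightarrow> real) \<Rightarrow> 'x \<Rightarrow> real" and f :: "(nat \<Rightarrow> real) \<Rightarrow> real"
  proof -
    interpret sublinear_endpoint_bounds "lebesgue_n nY" T A B a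
      using that(3-8) by unfold_locales auto
    have "1 / p = (2 - \<theta>) / 2" using that(10) by (simp add: field_simps)
    have "p = 1 / (1 / p)" by simp
    also have "\<dots> = 2 / (2 - \<theta>)" unfolding \<open>1 / p = (2 - \<theta>) / 2\<close> by simp
    finally have "p = 2 / (2 - \<theta>)" .
    then show ?thesis using weighted_Lp_bound[OF assms that(9,1,2)] by simp
  qed
  then show ?thesis by (intro allI impI exI) (elim conjE, blast)
qed

end
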